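(* Let $P$ be a countable unital left cancellative semigroup, let $S$ be the inverse semigroup $\{v_{p_1}^*v_{q_1}\cdots v_{p_n}^*v_{q_n}: n\ge1,\ p_i,q_i\in P\}\cup\{0\}$ in $C^*(P)$ with idempotent semilattice $E=\{e_X:X\in\mathcal{J}(P)\}$ and spectrum $\widehat{E}$, and let $$\widehat{E}_\vee=\{\phi\in\widehat{E}: \forall X,Y\in\mathcal{J}(P),\ X\cup Y\in\mathcal{J}(P)\Rightarrow \phi(e_{X\cup Y})=\phi(e_X)+\phi(e_Y)-\phi(e_{X\cap Y})\}.$$ Let $\sigma$ be a representation of $S$ on a Hilbert space $H$. Then $\sigma$ is supported in $\widehat{E}_\vee$ if and only if $\sigma(e_{X\cup Y})=\sigma(e_X)+\sigma(e_Y)-\sigma(e_{X\cap Y})$ for all $X,Y\in\mathcal{J}(P)$ with $X\cup Y\in\mathcal{J}(P)$.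
   Context: For $p\in P$, $pX$ is the image of $X\subseteq P$ under $q\mapsto pq$ and $p^{-1}X=\{q\in P:pq\in X\}$. The constructible right ideals are $\mathcal{J}(P)=\{p_1^{-1}q_1\cdots p_n^{-1}q_nP: n\ge1,\ p_i,q_i\in P\}\cup\{\emptyset\}$. $C^*(P)$ is the universal unital C*-algebra generated by isometries $\{v_p\}_{p\in P}$ and projections $\{e_X\}_{X\in\mathcal{J}(P)}$ with $v_pv_q=v_{pq}$, $v_pe_Xv_p^*=e_{pX}$, $e_\emptyset=0$, $e_P=1$, and $e_Xe_Y=e_{X\cap Y}$. The spectrum $\widehat{E}$ is the set of nonzero maps $\phi:E\to\{0,1\}$ with $\phi(0)=0$ and $\phi(ef)=\phi(e)\phi(f)$, with the pointwise convergence topology; for $e\in E$ let $1_e$ be the characteristic function of $\{\phi:\phi(e)=1\}$ (a continuous function). $\widehat{E}_\vee$ is a closed subset of $\widehat{E}$. A representation of $S$ on $H$ is a map $\sigma:S\to B(H)$ with $\sigma(st)=\sigma(s)\sigma(t)$, $\sigma(s^* )=\sigma(s)^*$ and $\sigma(0)=0$. Such $\sigma$ induces a unique *-representation $\pi_\sigma$ of $C(\widehat{E})$ on $H$ with $\pi_\sigma(1_e)=\sigma(e)$ for $e\in E$. For a closed subset $F\subseteq\widehat{E}$, $\sigma$ is supported in $F$ if $\pi_\sigma(f)=0$ for all $f\in C_0(\widehat{E}\setminus F)$. *)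

theory Defs
  imports "HOL-Analysis.Analysis"
begin

definition left_cancellative :: "('p::monoid_mult) itself \<Rightarrow> bool" where
  "left_cancellative _ \<longleftrightarrow> (\<forall>p q r::'p. p * q = p * r \<longrightarrow> q = r)"

definition lmul :: "'p::monoid_mult \<Rightarrow> 'p set \<Rightarrow> 'p set" where
  "lmul p X = (\<lambda>q. p * q) ` X"

definition linv :: "'p::monoid_mult \<Rightarrow> 'p set \<Rightarrow> 'p set" where
  "linv p X = {q. p * q \<in> X}"

(* the ideal p_1^{-1} q_1 ... p_n^{-1} q_n P, for the word [(p_1,q_1),...,(p_n,q_n)] *)
fun word_ideal :: "('p::monoid_mult \<times> 'p) list \<Rightarrow> 'p set" where
  "word_ideal [] = UNIV"
| "word_ideal ((p, q) # w) = linv p (lmul q (word_ideal w))"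

definition constr_ideals :: "('p::monoid_mult) set set" where
  "constr_ideals = {word_ideal w | w. w \<noteq> []} \<union> {{}}"

(* E = {e_X : X in J(P)} is identified with J(P) via X \<mapsto> e_X (injective, e_\<emptyset> = 0,
   e_X e_Y = e_{X \<inter> Y}).  A character phi : E \<rightarrow> {0,1} is represented as a real valued
   function on sets of P, taking values 0/1 on J(P) and normalised to 0 outside J(P). *)
definition spectrum_E :: "('p::monoid_mult set \<Rightarrow> real) set" where
  "spectrum_E = {\<phi>.
      (\<forall>X\<in>constr_ideals. \<phi> X \<in> {0, 1}) \<and>
      (\<forall>X. X \<notin> constr_ideals \<longrightarrow> \<phi> X = 0) \<and>
      (\<exists>X\<in>constr_ideals. \<phi> X \<noteq> 0) \<and>
      \<phi> {} = 0 \<and>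
      (\<forall>X\<in>constr_ideals. \<forall>Y\<in>constr_ideals. \<phi> (X \<inter> Y) = \<phi> X * \<phi> Y)}"

definition spectrum_E_vee :: "('p::monoid_mult set \<Rightarrow> real) set" where
  "spectrum_E_vee = {\<phi> \<in> spectrum_E.
      \<forall>X\<in>constr_ideals. \<forall>Y\<in>constr_ideals. X \<union> Y \<in> constr_ideals \<longrightarrow>
        \<phi> (X \<union> Y) = \<phi> X + \<phi> Y - \<phi> (X \<inter> Y)}"

(* 1_e for e = e_X : the characteristic function of {phi. phi(e_X) = 1} *)
definition ind_e :: "'p::monoid_mult set \<Rightarrow> ('p set \<Rightarrow> real) \<Rightarrow> complex" where
  "ind_e X = (\<lambda>\<phi>. complex_of_real (\<phi> X))"

(* A complex Hilbert space is modelled as a real Hilbert space 'h together with an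
   orthogonal complex structure J (multiplication by i):
   (a + i b) x = a x + b J x, and the complex inner product is
   <x,y>_C = <x,y> + i <x, J y>  (so the real inner product is its real part). *)
definition complex_structure :: "('h::real_inner \<Rightarrow> 'h) \<Rightarrow> bool" where
  "complex_structure J \<longleftrightarrow> bounded_linear J \<and> (\<forall>x. J (J x) = - x) \<and>
      (\<forall>x y. inner (J x) (J y) = inner x y)"

definition cscale :: "('h::real_vector \<Rightarrow> 'h) \<Rightarrow> complex \<Rightarrow> 'h \<Rightarrow> 'h" where
  "cscale J c x = Re c *\<^sub>R x + Im c *\<^sub>R J x"

definition is_bop :: "('h::real_normed_vector \<Rightarrow> 'h) \<Rightarrow> ('h \<Rightarrow> 'h) \<Rightarrow> bool" where
  "is_bop J T \<longleftrightarrow> bounded_linear T \<and> (\<forall>x. T (J x) = J (T x))"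

(* S = T^* (for complex linear T, S this is equivalent to adjointness for <.,.>_C) *)
definition is_adjoint :: "('h::real_inner \<Rightarrow> 'h) \<Rightarrow> ('h \<Rightarrow> 'h) \<Rightarrow> bool" where
  "is_adjoint T S \<longleftrightarrow> (\<forall>x y. inner (T x) y = inner x (S y))"

(* The restriction of a representation sigma of S on H to E = {e_X : X \<in> J(P)},
   written as a function of X: sigma X = sigma(e_X). *)
definition is_rep_E :: "('h::{real_inner,complete_space} \<Rightarrow> 'h) \<Rightarrow>
    ('p::monoid_mult set \<Rightarrow> 'h \<Rightarrow> 'h) \<Rightarrow> bool" where
  "is_rep_E J \<sigma> \<longleftrightarrow>
     (\<forall>X\<in>constr_ideals. is_bop J (\<sigma> X)) \<and>
     (\<forall>X\<in>constr_ideals. \<forall>Y\<in>constr_ideals. \<sigma> (X \<inter> Y) = \<sigma> X \<circ> \<sigma> Y) \<and>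
     (\<forall>X\<in>constr_ideals. is_adjoint (\<sigma> X) (\<sigma> X)) \<and>
     \<sigma> {} = (\<lambda>x. 0)"

(* *-representation of C(\<widehat>E) on H (elements of C(\<widehat>E) are the functions continuous
   on spectrum_E; pi only depends on their restriction to spectrum_E). *)
definition is_star_rep :: "('h::{real_inner,complete_space} \<Rightarrow> 'h) \<Rightarrow>
    ((('p::monoid_mult set \<Rightarrow> real) \<Rightarrow> complex) \<Rightarrow> 'h \<Rightarrow> 'h) \<Rightarrow> bool" where
  "is_star_rep J \<pi> \<longleftrightarrow>
     (\<forall>f. continuous_on spectrum_E f \<longrightarrow> is_bop J (\<pi> f)) \<and>
     (\<forall>f g. continuous_on spectrum_E f \<longrightarrow> continuous_on spectrum_E g \<longrightarrow>
        (\<forall>\<phi>\<in>spectrum_E. f \<phi> = g \<phi>) \<longrightarrow> \<pi> f = \<pi> g) \<and>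
     (\<forall>f g. continuous_on spectrum_E f \<longrightarrow> continuous_on spectrum_E g \<longrightarrow>
        \<pi> (\<lambda>\<phi>. f \<phi> + g \<phi>) = (\<lambda>x. \<pi> f x + \<pi> g x)) \<and>
     (\<forall>f c. continuous_on spectrum_E f \<longrightarrow>
        \<pi> (\<lambda>\<phi>. c * f \<phi>) = (\<lambda>x. cscale J c (\<pi> f x))) \<and>
     (\<forall>f g. continuous_on spectrum_E f \<longrightarrow> continuous_on spectrum_E g \<longrightarrow>
        \<pi> (\<lambda>\<phi>. f \<phi> * g \<phi>) = \<pi> f \<circ> \<pi> g) \<and>
     (\<forall>f. continuous_on spectrum_E f \<longrightarrow> is_adjoint (\<pi> f) (\<pi> (\<lambda>\<phi>. cnj (f \<phi>))))"

(* sigma is supported in F: pi_sigma(f) = 0 for all f \<in> C_0(\<widehat>E \ F), i.e. all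
   f \<in> C(\<widehat>E) vanishing on F.  pi_sigma is the unique *-representation with
   pi_sigma(1_e) = sigma(e); we quantify over all such pi. *)
definition supported_in :: "('h::{real_inner,complete_space} \<Rightarrow> 'h) \<Rightarrow>
    ('p::monoid_mult set \<Rightarrow> 'h \<Rightarrow> 'h) \<Rightarrow> ('p set \<Rightarrow> real) set \<Rightarrow> bool" where
  "supported_in J \<sigma> F \<longleftrightarrow>
     (\<forall>\<pi>. is_star_rep J \<pi> \<and> (\<forall>X\<in>constr_ideals. \<pi> (ind_e X) = \<sigma> X) \<longrightarrow>
        (\<forall>f. continuous_on spectrum_E f \<and> (\<forall>\<phi>\<in>F. f \<phi> = 0) \<longrightarrow> \<pi> f = (\<lambda>x. 0)))"

end

theory Submission
  imports Defs
begin

text \<open>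
  Enumerate the countable family \<open>J(P)\<close> as \<open>X\<^sub>0, X\<^sub>1, \<dots>\<close>. The commuting projections
  \<open>\<sigma>(X\<^sub>0), \<dots>, \<sigma>(X\<^sub>n\<^sub>-\<^sub>1)\<close> cut \<open>\<sigma>(P)\<close> into orthogonal atoms indexed by bit strings of
  length \<open>n\<close>. Following a branch of nonzero atoms through the binary tree of bit strings yields a
  character of \<open>E\<close> matching a given nonzero atom, and this character lies in \<open>\<widehat>E\<^sub>\<or>\<close>
  whenever \<open>\<sigma>\<close> satisfies the inclusion-exclusion identity. A continuous function \<open>f\<close> on the
  compact space \<open>\<widehat>E\<close> depends, up to \<open>\<epsilon>\<close>, only on finitely many coordinates, so every
  representation \<open>\<pi>\<close> of \<open>C(\<widehat>E)\<close> extending \<open>\<sigma>\<close> is approximated in norm by the atom sums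
  \<open>\<Sum>\<^sub>w f(\<phi>\<^sub>w) Q\<^sub>w\<close>, with \<open>\<phi>\<^sub>w\<close> any character matching the atom \<open>Q\<^sub>w\<close>.

  If \<open>\<sigma>\<close> satisfies inclusion-exclusion, the \<open>\<phi>\<^sub>w\<close> can be taken in \<open>\<widehat>E\<^sub>\<or>\<close>, so the atom sums of an
  \<open>f\<close> vanishing on \<open>\<widehat>E\<^sub>\<or>\<close> are zero and \<open>\<pi>(f) = 0\<close>. Conversely, the limits of atom sums form a
  representation extending \<open>\<sigma>\<close>, and its vanishing on
  \<open>1\<^bsub>X\<union>Y\<^esub> - 1\<^bsub>X\<^esub> - 1\<^bsub>Y\<^esub> + 1\<^bsub>X\<inter>Y\<^esub>\<close> is the inclusion-exclusion identity for \<open>\<sigma>\<close>.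
\<close>

section \<open>Uniform continuity on compact subsets of product spaces\<close>

lemma continuous_on_product_box:
  fixes f :: "('a \<Rightarrow> 'b::topological_space) \<Rightarrow> 'c::metric_space"
  assumes f: "continuous_on K f" and "\<phi> \<in> K" and "e > 0"
  shows "\<exists>W. finite {i. W i \<noteq> UNIV} \<and> (\<forall>i. open (W i)) \<and> \<phi> \<in> PiE UNIV W \<and>
    (\<forall>\<psi>\<in>K. \<psi> \<in> PiE UNIV W \<longrightarrow> dist (f \<psi>) (f \<phi>) < e)"
proof -
  have "\<exists>A. open A \<and> \<phi> \<in> A \<and> (\<forall>\<psi>\<in>K. \<psi> \<in> A \<longrightarrow> f \<psi> \<in> ball (f \<phi>) e)"
    using f[unfolded continuous_on_topological, rule_format, OF \<open>\<phi> \<in> K\<close>, of "ball (f \<phi>) e"]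
      \<open>e > 0\<close>
    by simp
  then obtain A where A: "open A" "\<phi> \<in> A" "\<And>\<psi>. \<psi> \<in> K \<Longrightarrow> \<psi> \<in> A \<Longrightarrow> dist (f \<psi>) (f \<phi>) < e"
    by (auto simp: dist_commute)
  then have "openin (product_topology (\<lambda>_. euclidean) UNIV) A"
    by (simp add: open_fun_def)
  then have "\<exists>W. finite {i \<in> UNIV. W i \<noteq> topspace euclidean} \<and>
      (\<forall>i\<in>UNIV. openin euclidean (W i)) \<and> \<phi> \<in> PiE UNIV W \<and> PiE UNIV W \<subseteq> A"
    using A(2) unfolding openin_product_topology_alt by blast
  then obtain W where "finite {i. W i \<noteq> UNIV}" "\<forall>i. open (W i)" "\<phi> \<in> PiE UNIV W"
    "PiE UNIV W \<subseteq> A"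
    by auto
  with A(3) show ?thesis by blast
qed

lemma PiE_UNIV_agree:
  assumes "\<phi> \<in> PiE UNIV W" and "\<And>i. W i \<noteq> UNIV \<Longrightarrow> \<phi> i = \<psi> i"
  shows "\<psi> \<in> PiE UNIV W"
proof -
  have "\<psi> i \<in> W i" for i
  proof (cases "W i = UNIV")
    case False
    then have "\<psi> i = \<phi> i" using assms(2) by force
    moreover have "\<phi> i \<in> W i" using assms(1) by (rule PiE_mem) simp
    ultimately show ?thesis by simp
  qed simp
  then show ?thesis by (simp add: PiE_iff)
qed

lemma continuous_on_compact_finite_coordinates:
  fixes f :: "('a \<Rightarrow> 'b::topological_space) \<Rightarrow> 'c::metric_space"
  assumes K: "compact K" and f: "continuous_on K f" and e: "e > 0"
  obtains D where "finite D"
    and "\<And>\<phi> \<psi>. \<phi> \<in> K \<Longrightarrow> \<psi> \<in> K \<Longrightarrow> (\<And>i. i \<in> D \<Longrightarrow> \<phi> i = \<psi> i) \<Longrightarrow>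
      dist (f \<phi>) (f \<psi>) < e"
proof -
  have "\<forall>\<phi>\<in>K. \<exists>W. finite {i. W i \<noteq> UNIV} \<and> (\<forall>i. open (W i)) \<and> \<phi> \<in> PiE UNIV W \<and>
      (\<forall>\<psi>\<in>K. \<psi> \<in> PiE UNIV W \<longrightarrow> dist (f \<psi>) (f \<phi>) < e/2)"
    by (intro ballI continuous_on_product_box[OF f _ half_gt_zero[OF e]])
  from bchoice[OF this] obtain W where W: "\<forall>\<phi>\<in>K. finite {i. W \<phi> i \<noteq> UNIV} \<and> (\<forall>i. open (W \<phi> i)) \<and>
      \<phi> \<in> PiE UNIV (W \<phi>) \<and> (\<forall>\<psi>\<in>K. \<psi> \<in> PiE UNIV (W \<phi>) \<longrightarrow> dist (f \<psi>) (f \<phi>) < e/2)"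
    by (elim exE)
  obtain B where B: "B \<subseteq> K" "finite B" "K \<subseteq> (\<Union>\<phi>\<in>B. PiE UNIV (W \<phi>))"
  proof (rule compactE_image[OF K])
    show "open (PiE UNIV (W \<phi>))" if "\<phi> \<in> K" for \<phi>
      using W that by (intro open_PiE) auto
    show "K \<subseteq> (\<Union>\<phi>\<in>K. PiE UNIV (W \<phi>))" using W by blast
  qed
  show ?thesis
  proof
    show "finite (\<Union>\<phi>\<in>B. {i. W \<phi> i \<noteq> UNIV})" using B(1,2) W by (intro finite_UN_I) auto
  next
    fix \<phi> \<psi> assume \<phi>: "\<phi> \<in> K" and \<psi>: "\<psi> \<in> K"
      and agree: "\<And>i. i \<in> (\<Union>\<phi>\<in>B. {i. W \<phi> i \<noteq> UNIV}) \<Longrightarrow> \<phi> i = \<psi> i"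
    obtain \<phi>\<^sub>0 where \<phi>\<^sub>0: "\<phi>\<^sub>0 \<in> B" "\<phi> \<in> PiE UNIV (W \<phi>\<^sub>0)" using B(3) \<phi> by blast
    have "\<psi> \<in> PiE UNIV (W \<phi>\<^sub>0)"
      by (rule PiE_UNIV_agree[OF \<phi>\<^sub>0(2)]) (use agree \<phi>\<^sub>0(1) in blast)
    then have "dist (f \<phi>) (f \<phi>\<^sub>0) < e/2" "dist (f \<psi>) (f \<phi>\<^sub>0) < e/2"
      using W \<phi>\<^sub>0 \<phi> \<psi> B(1) by blast+
    then show "dist (f \<phi>) (f \<psi>) < e"
      by (rule dist_triangle_half_l)
  qed
qed

definition bool_lists :: "nat \<Rightarrow> bool list set" where
  "bool_lists n = {xs. length xs = n}"

lemma finite_bool_lists [simp]: "finite (bool_lists n)"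
  unfolding bool_lists_def using finite_lists_length_eq[of "UNIV :: bool set" n] by simp

lemma bool_lists_0: "bool_lists 0 = {[]}"
  unfolding bool_lists_def by auto

lemma sum_bool_lists_Suc:
  "(\<Sum>xs\<in>bool_lists (Suc n). g xs) = (\<Sum>xs\<in>bool_lists n. g (True # xs) + g (False # xs))"
proof -
  have "bool_lists (Suc n) = Cons True ` bool_lists n \<union> Cons False ` bool_lists n"
    unfolding bool_lists_def by (auto simp: length_Suc_conv)
  then have "(\<Sum>xs\<in>bool_lists (Suc n). g xs) =
      (\<Sum>xs\<in>Cons True ` bool_lists n. g xs) + (\<Sum>xs\<in>Cons False ` bool_lists n. g xs)"
    by (simp only:) (rule sum.union_disjoint; auto)
  then show ?thesis by (simp add: sum.reindex sum.distrib)
qed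

lemma sum_bool_lists_add:
  "(\<Sum>ys\<in>bool_lists (k + n). g ys) = (\<Sum>zs\<in>bool_lists k. \<Sum>xs\<in>bool_lists n. g (zs @ xs))"
proof (induction k arbitrary: g)
  case (Suc k)
  then show ?case by (simp add: sum_bool_lists_Suc sum.distrib)
qed (simp add: bool_lists_0)

definition branch :: "nat \<Rightarrow> (nat \<Rightarrow> bool) \<Rightarrow> bool list" where
  "branch n \<beta> = rev (map \<beta> [0..<n])"

lemma branch_Suc: "branch (Suc n) \<beta> = \<beta> n # branch n \<beta>"
  by (simp add: branch_def)

lemma length_branch [simp]: "length (branch n \<beta>) = n"
  by (simp add: branch_def)

lemma rev_branch_nth [simp]: "i < n \<Longrightarrow> rev (branch n \<beta>) ! i = \<beta> i"
  by (simp add: branch_def)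

lemma branch_add: "branch (n + k) \<beta> = rev (map \<beta> [n..<n + k]) @ branch n \<beta>"
  by (induction k) (simp_all add: branch_Suc[of "n + _", simplified])

lemma infinite_branch:
  fixes P :: "bool list \<Rightarrow> bool"
  assumes "P xs" and step: "\<And>ys. P ys \<Longrightarrow> \<exists>b. P (b # ys)"
  obtains \<beta> where "\<And>k. P (branch (k + length xs) \<beta>)" and "branch (length xs) \<beta> = xs"
proof -
  define grow where "grow ys = (SOME b. P (b # ys)) # ys" for ys
  define e where "e k = (grow ^^ k) xs" for k
  have e_Suc: "e (Suc k) = (SOME b. P (b # e k)) # e k" for k
    by (simp add: e_def grow_def)
  have P_e: "P (e k)" for k
  proof (induction k)
    case (Suc k)
    show ?case unfolding e_Suc by (rule someI_ex[of "\<lambda>b. P (b # e k)", OF step[OF Suc]])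
  qed (simp add: e_def assms(1))
  define \<beta> where "\<beta> i = (if i < length xs then rev xs ! i else hd (e (Suc (i - length xs))))" for i
  have e_branch: "e k = branch (k + length xs) \<beta>" for k
  proof (induction k)
    case 0
    have "map \<beta> [0..<length xs] = map (\<lambda>i. rev xs ! i) [0..<length (rev xs)]"
      by (simp add: \<beta>_def)
    then show ?case by (simp only: e_def funpow_0 add_0 branch_def map_nth rev_rev_ident)
  next
    case (Suc k)
    then show ?case by (simp add: e_Suc branch_Suc \<beta>_def)
  qed
  show ?thesis
  proof (rule that)
    show "P (branch (k + length xs) \<beta>)" for k
      using P_e[of k] by (simp add: e_branch)
    show "branch (length xs) \<beta> = xs"
      using e_branch[of 0] by (simp add: e_def)
  qed
qed

lemma projection_inner_self:
  fixes P :: "'a::real_inner \<Rightarrow> 'a"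
  assumes "\<And>x y. inner (P x) y = inner x (P y)" and "\<And>x. P (P x) = P x"
  shows "inner x (P x) = (norm (P x))\<^sup>2"
  by (simp add: power2_norm_eq_inner assms)

lemma projection_norm_le:
  fixes P :: "'a::real_inner \<Rightarrow> 'a"
  assumes "\<And>x y. inner (P x) y = inner x (P y)" and "\<And>x. P (P x) = P x"
  shows "norm (P x) \<le> norm x"
proof -
  have "(norm (P x))\<^sup>2 \<le> norm x * norm (P x)"
    using projection_inner_self[OF assms] by (metis Cauchy_Schwarz_ineq2 abs_le_iff)
  then show ?thesis
    by (cases "P x = 0") (simp_all add: power2_eq_square)
qed

lemma projection_inner_le:
  fixes P :: "'a::real_inner \<Rightarrow> 'a"
  assumes "\<And>x y. inner (P x) y = inner x (P y)" and "\<And>x. P (P x) = P x"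
  shows "inner x (P x) \<le> (norm x)\<^sup>2"
  unfolding projection_inner_self[OF assms] using projection_norm_le[OF assms]
  by (simp add: power_mono)

locale complex_hilbert =
  fixes J :: "'h::{real_inner,complete_space} \<Rightarrow> 'h"
  assumes complex_structure: "complex_structure J"
begin

lemma bounded_linear_J [simp]: "bounded_linear J"
  and J_J [simp]: "J (J x) = - x"
  and inner_J_J [simp]: "inner (J x) (J y) = inner x y"
  using complex_structure unfolding complex_structure_def by blast+

lemma inner_J_left: "inner (J x) y = - inner x (J y)"
  using inner_J_J[of x "J y"] by simp

lemma inner_J_self [simp]: "inner x (J x) = 0"
  using inner_J_left[of x x] by (simp add: inner_commute)

lemma bounded_linear_cscale [simp]: "bounded_linear (cscale J c)"
  unfolding cscale_def
  by (intro bounded_linear_add bounded_linear_scaleR_right bounded_linear_ident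
      bounded_linear_compose[OF bounded_linear_scaleR_right bounded_linear_J])

lemma cscale_add_left: "cscale J (a + b) x = cscale J a x + cscale J b x"
  unfolding cscale_def by (simp add: algebra_simps)

lemma cscale_of_real [simp]: "cscale J (complex_of_real r) x = r *\<^sub>R x"
  unfolding cscale_def by simp

lemma cscale_zero_left [simp]: "cscale J 0 x = 0"
  and cscale_one [simp]: "cscale J 1 x = x"
  using cscale_of_real[of 0] cscale_of_real[of 1] by simp_all

lemma cscale_diff_left: "cscale J (a - b) x = cscale J a x - cscale J b x"
  unfolding cscale_def by (simp add: algebra_simps)

lemma cscale_mult: "cscale J (a * b) x = cscale J a (cscale J b x)"
  unfolding cscale_def by (simp add: linear_simps algebra_simps)

lemma cscale_J: "cscale J c (J x) = J (cscale J c x)"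
  unfolding cscale_def by (simp add: linear_simps)

lemma cscale_commute:
  assumes "bounded_linear T" and "\<And>x. T (J x) = J (T x)"
  shows "T (cscale J c x) = cscale J c (T x)"
  unfolding cscale_def using assms by (simp add: linear_simps)

lemma inner_cscale_left: "inner (cscale J c x) y = inner x (cscale J (cnj c) y)"
  unfolding cscale_def
  by (simp add: inner_add_left inner_add_right inner_diff_right inner_J_left)

lemma norm_cscale: "norm (cscale J c x) = cmod c * norm x"
proof -
  have "(norm (cscale J c x))\<^sup>2 = ((Re c)\<^sup>2 + (Im c)\<^sup>2) * (norm x)\<^sup>2"
    unfolding cscale_def power2_norm_eq_inner
    by (simp add: inner_add_left inner_add_right inner_commute[of "J x" x]
        power2_eq_square algebra_simps)
  also have "\<dots> = (cmod c * norm x)\<^sup>2"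
    by (simp add: cmod_def power_mult_distrib)
  finally show ?thesis by (simp add: power2_eq_iff_nonneg)
qed

end

lemma UNIV_in_constr_ideals: "(UNIV :: 'p::monoid_mult set) \<in> constr_ideals"
proof -
  have "UNIV = word_ideal [(1::'p, 1)]" by (auto simp: linv_def lmul_def)
  then show ?thesis unfolding constr_ideals_def by blast
qed

lemma empty_in_constr_ideals: "{} \<in> constr_ideals"
  by (simp add: constr_ideals_def)

lemma linv_lmul_in_constr_ideals:
  "V \<in> constr_ideals \<Longrightarrow> linv p (lmul q V) \<in> constr_ideals"
proof -
  assume "V \<in> constr_ideals"
  then consider "V = {}" | v where "V = word_ideal v"
    unfolding constr_ideals_def by blast
  then show ?thesis
  proof cases
    case 1
    then show ?thesis by (simp add: linv_def lmul_def empty_in_constr_ideals)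
  next
    case 2
    then have "linv p (lmul q V) = word_ideal ((p, q) # v)" by simp
    then show ?thesis unfolding constr_ideals_def by blast
  qed
qed

lemma linv_lmul_Int:
  fixes p q :: "'p::monoid_mult"
  assumes "left_cancellative TYPE('p)"
  shows "linv p (lmul q V) \<inter> Y = linv p (lmul q (V \<inter> linv q (lmul p Y)))"
proof (rule set_eqI)
  fix x
  have "x \<in> linv p (lmul q V) \<inter> Y \<longleftrightarrow> (\<exists>z\<in>V. p * x = q * z) \<and> x \<in> Y"
    by (auto simp: linv_def lmul_def)
  also have "\<dots> \<longleftrightarrow> (\<exists>z\<in>V. p * x = q * z \<and> (\<exists>y\<in>Y. q * z = p * y))"
    using assms unfolding left_cancellative_def by (metis (no_types))
  also have "\<dots> \<longleftrightarrow> x \<in> linv p (lmul q (V \<inter> linv q (lmul p Y)))"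
    by (auto simp: linv_def lmul_def)
  finally show "x \<in> linv p (lmul q V) \<inter> Y \<longleftrightarrow> \<dots>" .
qed

lemma Int_in_constr_ideals:
  fixes X Y :: "'p::monoid_mult set"
  assumes "left_cancellative TYPE('p)" and "X \<in> constr_ideals" "Y \<in> constr_ideals"
  shows "X \<inter> Y \<in> constr_ideals"
proof -
  have word_Int: "word_ideal w \<inter> Y \<in> constr_ideals"
    if "Y \<in> constr_ideals" for w :: "('p \<times> 'p) list" and Y
    using that
  proof (induction w arbitrary: Y)
    case (Cons a w)
    obtain p q where "a = (p, q)" by (cases a)
    then show ?case
      by (simp add: linv_lmul_Int[OF assms(1)] linv_lmul_in_constr_ideals Cons)
  qed simp
  from assms(2) consider "X = {}" | w where "X = word_ideal w"
    unfolding constr_ideals_def by blast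
  then show ?thesis
    using word_Int assms(3) empty_in_constr_ideals by cases auto
qed

lemma countable_constr_ideals:
  assumes "countable (UNIV :: 'p::monoid_mult set)"
  shows "countable (constr_ideals :: 'p set set)"
proof -
  have "countable (UNIV :: ('p \<times> 'p) set)"
    using assms by (metis UNIV_Times_UNIV countable_SIGMA)
  then have "countable (lists (UNIV :: ('p \<times> 'p) set))"
    by blast
  then have "countable (insert {} (range (word_ideal :: ('p \<times> 'p) list \<Rightarrow> 'p set)))"
    by (simp add: lists_UNIV)
  moreover have "constr_ideals \<subseteq> insert {} (range (word_ideal :: ('p \<times> 'p) list \<Rightarrow> 'p set))"
    unfolding constr_ideals_def by auto
  ultimately show ?thesis by (rule countable_subset[rotated])
qed

lemma spectrum_E_UNIV: "\<phi> \<in> spectrum_E \<Longrightarrow> \<phi> UNIV = 1"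
proof -
  assume sp: "\<phi> \<in> spectrum_E"
  then obtain X where "X \<in> constr_ideals" "\<phi> X \<noteq> 0" unfolding spectrum_E_def by blast
  moreover have "\<phi> (X \<inter> UNIV) = \<phi> X * \<phi> UNIV"
    using sp calculation(1) UNIV_in_constr_ideals unfolding spectrum_E_def by blast
  ultimately show ?thesis by simp
qed

lemma spectrum_E_values: "\<phi> \<in> spectrum_E \<Longrightarrow> \<phi> X = 0 \<or> \<phi> X = 1"
  unfolding spectrum_E_def by (cases "X \<in> constr_ideals") auto

lemma spectrum_E_Int:
  "\<phi> \<in> spectrum_E \<Longrightarrow> X \<in> constr_ideals \<Longrightarrow> Y \<in> constr_ideals \<Longrightarrow> \<phi> (X \<inter> Y) = \<phi> X * \<phi> Y"
  unfolding spectrum_E_def by blast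

lemma spectrum_E_not_constr: "\<phi> \<in> spectrum_E \<Longrightarrow> X \<notin> constr_ideals \<Longrightarrow> \<phi> X = 0"
  unfolding spectrum_E_def by blast

text \<open>A closed description: given multiplicativity, the nontriviality condition of
  \<^const>\<open>spectrum_E\<close> amounts to \<open>\<phi> UNIV = 1\<close>.\<close>
lemma spectrum_E_eq:
  "spectrum_E = {\<phi> :: 'p::monoid_mult set \<Rightarrow> real.
      (\<forall>X. (X \<in> constr_ideals \<longrightarrow> \<phi> X = 0 \<or> \<phi> X = 1) \<and>
        (X \<notin> constr_ideals \<longrightarrow> \<phi> X = 0)) \<and>
      \<phi> UNIV = 1 \<and> \<phi> {} = 0 \<and>
      (\<forall>X Y. X \<in> constr_ideals \<and> Y \<in> constr_ideals \<longrightarrow> \<phi> (X \<inter> Y) = \<phi> X * \<phi> Y)}"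
  (is "_ = ?R")
proof (intro equalityI subsetI)
  fix \<phi> :: "'p set \<Rightarrow> real"
  assume sp: "\<phi> \<in> spectrum_E"
  then have "\<phi> {} = 0" unfolding spectrum_E_def by blast
  with sp show "\<phi> \<in> ?R"
    using spectrum_E_UNIV spectrum_E_values spectrum_E_not_constr spectrum_E_Int by blast
next
  fix \<phi> :: "'p set \<Rightarrow> real"
  assume R: "\<phi> \<in> ?R"
  show "\<phi> \<in> spectrum_E"
    unfolding spectrum_E_def
  proof (intro CollectI conjI)
    show "\<exists>X\<in>constr_ideals. \<phi> X \<noteq> 0"
      using R UNIV_in_constr_ideals by force
  qed (use R in blast)+
qed

lemma compact_spectrum_E: "compact (spectrum_E :: ('p::monoid_mult set \<Rightarrow> real) set)"
proof -
  have "compactin (product_topology (\<lambda>_. euclidean) UNIV) (PiE UNIV (\<lambda>_. {0, 1 :: real}))"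
    by (auto simp: compactin_PiE intro: finite_imp_compact)
  then have "compact (PiE UNIV (\<lambda>_::'p set. {0, 1 :: real}))"
    by (simp add: euclidean_product_topology)
  moreover have "closed (spectrum_E :: ('p set \<Rightarrow> real) set)"
    unfolding spectrum_E_eq
    by (intro closed_Collect_conj closed_Collect_all closed_Collect_imp closed_Collect_disj
        closed_Collect_eq open_Collect_const continuous_on_product_coordinates
        continuous_on_mult continuous_on_const)
  moreover have "spectrum_E \<subseteq> PiE UNIV (\<lambda>_::'p set. {0, 1 :: real})"
    using spectrum_E_values by (auto simp: PiE_UNIV_domain)
  ultimately show ?thesis by (metis compact_Int_closed inf.absorb_iff2)
qed

lemma continuous_on_spectrum_E_bounded:
  assumes "continuous_on spectrum_E f"
  obtains M where "M \<ge> 0" and "\<And>\<phi>. \<phi> \<in> spectrum_E \<Longrightarrow> cmod (f \<phi>) \<le> M"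
proof -
  have "bounded (f ` spectrum_E)"
    by (rule compact_imp_bounded[OF compact_continuous_image[OF assms compact_spectrum_E]])
  then show ?thesis
    using that unfolding bounded_pos by (metis image_eqI less_eq_real_def)
qed

lemma continuous_on_ind_e [continuous_intros]: "continuous_on S (ind_e X)"
  unfolding ind_e_def
  by (intro continuous_intros continuous_on_subset[OF continuous_on_product_coordinates]) auto

definition union_additive :: "('p::monoid_mult set \<Rightarrow> 'h::real_vector \<Rightarrow> 'h) \<Rightarrow> bool" where
  "union_additive \<sigma> \<longleftrightarrow> (\<forall>X\<in>constr_ideals. \<forall>Y\<in>constr_ideals. X \<union> Y \<in> constr_ideals \<longrightarrow>
       \<sigma> (X \<union> Y) = (\<lambda>x. \<sigma> X x + \<sigma> Y x - \<sigma> (X \<inter> Y) x))"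

locale star_rep = complex_hilbert J for J :: "'h::{real_inner,complete_space} \<Rightarrow> 'h" +
  fixes \<pi> :: "(('p::monoid_mult set \<Rightarrow> real) \<Rightarrow> complex) \<Rightarrow> 'h \<Rightarrow> 'h"
  assumes star_rep: "is_star_rep J \<pi>"
begin

lemma bounded_linear_rep: "continuous_on spectrum_E f \<Longrightarrow> bounded_linear (\<pi> f)"
  using star_rep unfolding is_star_rep_def is_bop_def by blast

lemma rep_cong:
  "continuous_on spectrum_E f \<Longrightarrow> continuous_on spectrum_E g \<Longrightarrow>
    (\<And>\<phi>. \<phi> \<in> spectrum_E \<Longrightarrow> f \<phi> = g \<phi>) \<Longrightarrow> \<pi> f = \<pi> g"
  using star_rep unfolding is_star_rep_def by blast

lemma rep_add:
  "continuous_on spectrum_E f \<Longrightarrow> continuous_on spectrum_E g \<Longrightarrow>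
    \<pi> (\<lambda>\<phi>. f \<phi> + g \<phi>) x = \<pi> f x + \<pi> g x"
  using star_rep unfolding is_star_rep_def by metis

lemma rep_scale: "continuous_on spectrum_E f \<Longrightarrow> \<pi> (\<lambda>\<phi>. c * f \<phi>) x = cscale J c (\<pi> f x)"
  using star_rep unfolding is_star_rep_def by metis

lemma rep_mult:
  "continuous_on spectrum_E f \<Longrightarrow> continuous_on spectrum_E g \<Longrightarrow>
    \<pi> (\<lambda>\<phi>. f \<phi> * g \<phi>) x = \<pi> f (\<pi> g x)"
  using star_rep unfolding is_star_rep_def by (metis comp_apply)

lemma rep_adjoint:
  "continuous_on spectrum_E f \<Longrightarrow> inner (\<pi> f x) y = inner x (\<pi> (\<lambda>\<phi>. cnj (f \<phi>)) y)"
  using star_rep unfolding is_star_rep_def is_adjoint_def by blast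

lemma rep_diff:
  assumes f: "continuous_on spectrum_E f" and g: "continuous_on spectrum_E g"
  shows "\<pi> (\<lambda>\<phi>. f \<phi> - g \<phi>) x = \<pi> f x - \<pi> g x"
proof -
  have "\<pi> (\<lambda>\<phi>. f \<phi> - g \<phi>) x = \<pi> (\<lambda>\<phi>. f \<phi> + (- 1) * g \<phi>) x"
    by simp
  also have "\<dots> = \<pi> f x + \<pi> (\<lambda>\<phi>. (- 1) * g \<phi>) x"
    by (rule rep_add[OF f]) (use g in \<open>intro continuous_intros\<close>)
  also have "\<dots> = \<pi> f x - \<pi> g x"
    unfolding rep_scale[OF g] by (simp add: cscale_def)
  finally show ?thesis .
qed

lemma rep_zero: "\<pi> (\<lambda>\<phi>. 0) x = 0"
  using rep_scale[of "\<lambda>\<phi>. 0" 0 x] by simp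

lemma rep_sum:
  assumes "finite S" and "\<And>i. i \<in> S \<Longrightarrow> continuous_on spectrum_E (g i)"
  shows "\<pi> (\<lambda>\<phi>. \<Sum>i\<in>S. g i \<phi>) x = (\<Sum>i\<in>S. \<pi> (g i) x)"
  using assms
proof (induction S rule: finite_induct)
  case (insert a S)
  then have "\<pi> (\<lambda>\<phi>. g a \<phi> + (\<Sum>i\<in>S. g i \<phi>)) x = \<pi> (g a) x + \<pi> (\<lambda>\<phi>. \<Sum>i\<in>S. g i \<phi>) x"
    by (intro rep_add) (auto intro!: continuous_intros)
  with insert show ?case by simp
qed (simp add: rep_zero)

lemma inner_rep_one_le: "inner x (\<pi> (\<lambda>\<phi>. 1) x) \<le> (norm x)\<^sup>2"
proof (rule projection_inner_le)
  show "inner (\<pi> (\<lambda>\<phi>. 1) x) y = inner x (\<pi> (\<lambda>\<phi>. 1) y)" for x y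
    using rep_adjoint[of "\<lambda>\<phi>. 1"] by simp
  show "\<pi> (\<lambda>\<phi>. 1) (\<pi> (\<lambda>\<phi>. 1) x) = \<pi> (\<lambda>\<phi>. 1) x" for x
    using rep_mult[of "\<lambda>\<phi>. 1" "\<lambda>\<phi>. 1" x] by simp
qed

lemma norm_rep_squared:
  assumes g: "continuous_on spectrum_E g"
  shows "(norm (\<pi> g x))\<^sup>2 = inner x (\<pi> (\<lambda>\<phi>. cnj (g \<phi>) * g \<phi>) x)"
  using rep_adjoint[OF g, of x "\<pi> g x"] rep_mult[of "\<lambda>\<phi>. cnj (g \<phi>)" g x] g
  by (simp add: power2_norm_eq_inner continuous_on_cnj)

text \<open>\<open>M\<^sup>2 - |f|\<^sup>2\<close> has a continuous square root \<open>h\<close> on the spectrum, and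
  \<open>\<parallel>\<pi> f x\<parallel>\<^sup>2 + \<parallel>\<pi> h x\<parallel>\<^sup>2 = M\<^sup>2 \<langle>x, \<pi> 1 x\<rangle>\<close>.\<close>
lemma rep_norm_le:
  assumes f: "continuous_on spectrum_E f" and M: "M \<ge> 0"
    and fM: "\<And>\<phi>. \<phi> \<in> spectrum_E \<Longrightarrow> cmod (f \<phi>) \<le> M"
  shows "norm (\<pi> f x) \<le> M * norm x"
proof -
  define h where "h \<phi> = complex_of_real (sqrt (M\<^sup>2 - (cmod (f \<phi>))\<^sup>2))" for \<phi>
  have h: "continuous_on spectrum_E h"
    unfolding h_def using f by (intro continuous_intros)
  have sum_sq: "\<pi> (\<lambda>\<phi>. cnj (f \<phi>) * f \<phi> + cnj (h \<phi>) * h \<phi>) = \<pi> (\<lambda>\<phi>. complex_of_real (M\<^sup>2) * 1)"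
  proof (rule rep_cong)
    fix \<phi> :: "'p set \<Rightarrow> real" assume "\<phi> \<in> spectrum_E"
    then have "(cmod (f \<phi>))\<^sup>2 \<le> M\<^sup>2" using fM by (simp add: power_mono)
    then have "cnj (h \<phi>) * h \<phi> = complex_of_real (M\<^sup>2 - (cmod (f \<phi>))\<^sup>2)"
      unfolding h_def by (simp flip: of_real_mult)
    moreover have "cnj (f \<phi>) * f \<phi> = complex_of_real ((cmod (f \<phi>))\<^sup>2)"
      by (subst mult.commute) (rule complex_norm_square[symmetric])
    ultimately show "cnj (f \<phi>) * f \<phi> + cnj (h \<phi>) * h \<phi> = complex_of_real (M\<^sup>2) * 1"
      by (simp flip: of_real_add)
  qed (use f h in \<open>auto intro!: continuous_intros\<close>)
  have "(norm (\<pi> f x))\<^sup>2 + (norm (\<pi> h x))\<^sup>2 =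
      inner x (\<pi> (\<lambda>\<phi>. cnj (f \<phi>) * f \<phi> + cnj (h \<phi>) * h \<phi>) x)"
    using f h by (simp add: norm_rep_squared rep_add continuous_intros inner_add_right)
  also have "\<dots> = M\<^sup>2 * inner x (\<pi> (\<lambda>\<phi>. 1) x)"
    unfolding sum_sq using rep_scale[of "\<lambda>\<phi>. 1" "complex_of_real (M\<^sup>2)" x]
    by (simp only: cscale_of_real continuous_on_const simp_thms inner_scaleR_right)
  also have "\<dots> \<le> M\<^sup>2 * (norm x)\<^sup>2"
    by (simp add: mult_left_mono inner_rep_one_le)
  finally have "(norm (\<pi> f x))\<^sup>2 \<le> M\<^sup>2 * (norm x)\<^sup>2"
    using zero_le_power2[of "norm (\<pi> h x)"] by linarith
  then have "(norm (\<pi> f x))\<^sup>2 \<le> (M * norm x)\<^sup>2"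
    by (simp only: power_mult_distrib)
  then show ?thesis by (rule power2_le_imp_le) (use M in simp)
qed

end

section \<open>Atoms of a representation of E\<close>

locale rep_E = complex_hilbert J for J :: "'h::{real_inner,complete_space} \<Rightarrow> 'h" +
  fixes \<sigma> :: "'p::monoid_mult set \<Rightarrow> 'h \<Rightarrow> 'h"
  assumes countable_P: "countable (UNIV :: 'p set)"
    and left_cancellative: "left_cancellative TYPE('p)"
    and rep: "is_rep_E J \<sigma>"
begin

lemmas [simp] = UNIV_in_constr_ideals empty_in_constr_ideals

lemma Int_constr [simp]: "(X :: 'p set) \<in> constr_ideals \<Longrightarrow> Y \<in> constr_ideals \<Longrightarrow> X \<inter> Y \<in> constr_ideals"
  by (rule Int_in_constr_ideals[OF left_cancellative])

lemma bounded_linear_sigma [simp]: "X \<in> constr_ideals \<Longrightarrow> bounded_linear (\<sigma> X)"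
  using rep unfolding is_rep_E_def is_bop_def by simp

lemma sigma_J: "X \<in> constr_ideals \<Longrightarrow> \<sigma> X (J x) = J (\<sigma> X x)"
  using rep unfolding is_rep_E_def is_bop_def by blast

lemma sigma_sigma [simp]:
  "X \<in> constr_ideals \<Longrightarrow> Y \<in> constr_ideals \<Longrightarrow> \<sigma> X (\<sigma> Y x) = \<sigma> (X \<inter> Y) x"
  using rep unfolding is_rep_E_def by (metis comp_apply)

lemma inner_sigma_left: "X \<in> constr_ideals \<Longrightarrow> inner (\<sigma> X x) y = inner x (\<sigma> X y)"
  using rep unfolding is_rep_E_def is_adjoint_def by blast

lemma sigma_empty [simp]: "\<sigma> {} x = 0"
  using rep unfolding is_rep_E_def by simp

definition enum :: "nat \<Rightarrow> 'p set" where
  "enum = from_nat_into constr_ideals"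

lemma enum_in [simp]: "enum i \<in> constr_ideals"
  unfolding enum_def by (rule from_nat_into) (use UNIV_in_constr_ideals in blast)

lemma enum_surj: "X \<in> constr_ideals \<Longrightarrow> \<exists>i. enum i = X"
  unfolding enum_def
  using from_nat_into_surj[OF countable_constr_ideals[OF countable_P]] by blast

definition sigma_side :: "bool \<Rightarrow> 'p set \<Rightarrow> 'h \<Rightarrow> 'h" where
  "sigma_side b W x = (if b then \<sigma> W x else \<sigma> UNIV x - \<sigma> W x)"

text \<open>The atom \<open>atom xs\<close> of the Boolean algebra generated by \<open>\<sigma> (enum 0), \<dots>, \<sigma> (enum (n - 1))\<close>,
  for \<open>length xs = n\<close>; the bit for \<open>enum i\<close> is \<open>rev xs ! i\<close>, so new generators are
  consed onto the front.\<close>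
fun atom :: "bool list \<Rightarrow> 'h \<Rightarrow> 'h" where
  "atom [] x = \<sigma> UNIV x"
| "atom (b # xs) x = sigma_side b (enum (length xs)) (atom xs x)"

lemma bounded_linear_sigma_side [simp]: "W \<in> constr_ideals \<Longrightarrow> bounded_linear (sigma_side b W)"
  unfolding sigma_side_def by (cases b) (auto intro: bounded_linear_sub)

lemma bounded_linear_atom [simp]: "bounded_linear (atom xs)"
proof (induction xs)
  case Nil
  then show ?case by (simp add: fun_eq_iff[symmetric])
next
  case (Cons b xs)
  have "atom (b # xs) = sigma_side b (enum (length xs)) \<circ> atom xs" by (simp add: fun_eq_iff)
  then show ?case using bounded_linear_compose[OF bounded_linear_sigma_side Cons.IH]
    by (simp add: o_def)
qed

lemma atom_sum_distrib: "atom xs (\<Sum>i\<in>A. g i) = (\<Sum>i\<in>A. atom xs (g i))"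
  by (rule linear_sum[OF bounded_linear.linear[OF bounded_linear_atom]])

lemma sigma_side_commute:
  "A \<in> constr_ideals \<Longrightarrow> B \<in> constr_ideals \<Longrightarrow>
    sigma_side b A (sigma_side c B x) = sigma_side c B (sigma_side b A x)"
  unfolding sigma_side_def by (auto simp: linear_simps Int_commute)

lemma sigma_side_idem [simp]:
  "A \<in> constr_ideals \<Longrightarrow> sigma_side b A (sigma_side b A x) = sigma_side b A x"
  unfolding sigma_side_def by (auto simp: linear_simps)

lemma sigma_side_orth: "A \<in> constr_ideals \<Longrightarrow> b \<noteq> c \<Longrightarrow> sigma_side b A (sigma_side c A x) = 0"
  unfolding sigma_side_def by (auto simp: linear_simps)

lemma sigma_side_sigma_UNIV [simp]:
  "A \<in> constr_ideals \<Longrightarrow> sigma_side b A (\<sigma> UNIV x) = sigma_side b A x"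
  unfolding sigma_side_def by (auto simp: linear_simps)

lemma sigma_UNIV_sigma_side [simp]:
  "A \<in> constr_ideals \<Longrightarrow> \<sigma> UNIV (sigma_side b A x) = sigma_side b A x"
  unfolding sigma_side_def by (auto simp: linear_simps)

lemma sigma_side_J: "A \<in> constr_ideals \<Longrightarrow> sigma_side b A (J x) = J (sigma_side b A x)"
  unfolding sigma_side_def by (auto simp: sigma_J linear_simps)

lemma inner_sigma_side_left:
  "A \<in> constr_ideals \<Longrightarrow> inner (sigma_side b A x) y = inner x (sigma_side b A y)"
  unfolding sigma_side_def
  by (auto simp: inner_sigma_left linear_simps inner_diff_left inner_diff_right)

lemma sigma_UNIV_atom [simp]: "\<sigma> UNIV (atom xs x) = atom xs x"
  by (cases xs) auto

lemma sigma_side_atom: "A \<in> constr_ideals \<Longrightarrow> sigma_side b A (atom xs x) = atom xs (sigma_side b A x)"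
  by (induction xs) (auto simp: sigma_side_commute)

lemma atom_J: "atom xs (J x) = J (atom xs x)"
  by (induction xs) (auto simp: sigma_J sigma_side_J)

lemma inner_atom_left: "inner (atom xs x) y = inner x (atom xs y)"
  by (induction xs arbitrary: x y)
    (auto simp: inner_sigma_left inner_sigma_side_left sigma_side_atom)

lemma atom_idem [simp]: "atom xs (atom xs x) = atom xs x"
  by (induction xs arbitrary: x) (auto simp: sigma_side_atom)

lemma atom_absorbs_side: "i < length xs \<Longrightarrow> sigma_side (rev xs ! i) (enum i) (atom xs x) = atom xs x"
proof (induction xs arbitrary: x)
  case (Cons b xs)
  then show ?case
    by (cases "i = length xs") (auto simp: nth_append sigma_side_commute[of "enum i"])
qed simp

lemma atom_orth: "length xs = length ys \<Longrightarrow> xs \<noteq> ys \<Longrightarrow> atom xs (atom ys x) = 0"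
proof (induction xs arbitrary: ys x)
  case (Cons b xs)
  then obtain c ys' where ys: "ys = c # ys'" "length ys' = length xs" by (cases ys) auto
  have "atom (b # xs) (atom ys x) =
      sigma_side b (enum (length xs)) (sigma_side c (enum (length xs)) (atom xs (atom ys' x)))"
    using ys by (simp add: sigma_side_atom)
  also have "\<dots> = 0"
  proof (cases "b = c")
    case True
    then have "atom xs (atom ys' x) = 0" using Cons ys by simp
    then show ?thesis by (simp add: linear_simps)
  next
    case False
    then show ?thesis by (simp add: sigma_side_orth)
  qed
  finally show ?case .
qed simp

lemma atom_split: "atom (True # xs) x + atom (False # xs) x = atom xs x"
  by (simp add: sigma_side_def)

lemma sum_atoms_append: "(\<Sum>zs\<in>bool_lists k. atom (zs @ xs) x) = atom xs x"
proof (induction k)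
  case (Suc k)
  then show ?case by (simp only: sum_bool_lists_Suc append_Cons atom_split)
qed (simp add: bool_lists_0)

lemma sum_atoms: "(\<Sum>xs\<in>bool_lists n. atom xs x) = \<sigma> UNIV x"
  using sum_atoms_append[where k = n and xs = "[]"] by simp

lemma inner_atom_self: "inner x (atom xs x) = (norm (atom xs x))\<^sup>2"
  by (rule projection_inner_self) (simp_all add: inner_atom_left)

lemma atom_append_nonzero: "atom (zs @ xs) x \<noteq> 0 \<Longrightarrow> \<exists>y. atom xs y \<noteq> 0"
proof (induction zs arbitrary: x)
  case (Cons b zs)
  then have "atom (zs @ xs) x \<noteq> 0" by (auto simp: linear_simps)
  then show ?case by (rule Cons.IH)
qed auto

section \<open>Characters through nonzero atoms\<close>

lemma sigma_side_False_UNIV [simp]: "sigma_side False UNIV x = 0"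
  and sigma_side_True_empty [simp]: "sigma_side True {} x = 0"
  by (simp_all add: sigma_side_def)

lemma sigma_side_Int_vanish:
  assumes "X \<in> constr_ideals" "Y \<in> constr_ideals" and "d \<noteq> (b \<and> c)"
  shows "sigma_side b X (sigma_side c Y (sigma_side d (X \<inter> Y) x)) = 0"
  using assms by (cases b; cases c; cases d) (auto simp: sigma_side_def linear_simps Int_ac)

lemma sigma_side_Un_vanish:
  assumes "union_additive \<sigma>" and "X \<in> constr_ideals" "Y \<in> constr_ideals" "X \<union> Y \<in> constr_ideals"
  shows "sigma_side True (X \<union> Y) (sigma_side False X (sigma_side False Y x)) = 0"
proof -
  have "X \<inter> Y \<inter> (X \<union> Y) = X \<inter> Y" by blast
  then have "sigma_side True (X \<union> Y) (sigma_side False X (sigma_side False Y x)) =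
      \<sigma> (X \<union> Y) x - \<sigma> X x - \<sigma> Y x + \<sigma> (X \<inter> Y) x"
    using assms(2-4) by (simp add: sigma_side_def linear_simps Int_absorb2 Int_commute)
  then show ?thesis
    using assms unfolding union_additive_def by simp
qed

definition matches :: "('p set \<Rightarrow> real) \<Rightarrow> bool list \<Rightarrow> bool" where
  "matches \<phi> xs \<longleftrightarrow> (\<forall>i<length xs. \<phi> (enum i) = (if rev xs ! i then 1 else 0))"

lemma matches_Cons:
  "matches \<phi> (b # xs) \<longleftrightarrow> \<phi> (enum (length xs)) = (if b then 1 else 0) \<and> matches \<phi> xs"
  unfolding matches_def by (auto simp: nth_append less_Suc_eq)

lemma matches_append: "matches \<phi> (zs @ xs) \<Longrightarrow> matches \<phi> xs"
  by (induction zs) (auto simp: matches_Cons)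

lemma matches_agree:
  "matches \<phi> xs \<Longrightarrow> matches \<psi> xs \<Longrightarrow> i < length xs \<Longrightarrow> \<phi> (enum i) = \<psi> (enum i)"
  unfolding matches_def by simp

definition pattern :: "nat \<Rightarrow> ('p set \<Rightarrow> real) \<Rightarrow> bool list" where
  "pattern n \<phi> = branch n (\<lambda>i. \<phi> (enum i) = 1)"

lemma matches_iff_pattern:
  assumes "\<phi> \<in> spectrum_E" and "length xs = n"
  shows "matches \<phi> xs \<longleftrightarrow> xs = pattern n \<phi>"
  using assms(2)
proof (induction xs arbitrary: n)
  case (Cons b xs)
  then show ?case
    using spectrum_E_values[OF assms(1), of "enum (length xs)"]
    by (auto simp: matches_Cons pattern_def branch_Suc)
qed (simp add: matches_def pattern_def branch_def)

lemma nonzero_atom_branch: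
  assumes "atom xs y \<noteq> 0"
  obtains \<beta> where "\<And>n. \<exists>y. atom (branch n \<beta>) y \<noteq> 0" and "branch (length xs) \<beta> = xs"
proof -
  have "\<exists>b y. atom (b # ys) y \<noteq> 0" if "\<exists>y. atom ys y \<noteq> 0" for ys
    using that atom_split[of ys] by (metis add_0)
  with assms obtain \<beta> where nz: "\<And>k. \<exists>y. atom (branch (k + length xs) \<beta>) y \<noteq> 0"
    and xs: "branch (length xs) \<beta> = xs"
    using infinite_branch[of "\<lambda>ys. \<exists>y. atom ys y \<noteq> 0" xs] by blast
  show ?thesis
  proof (rule that[OF _ xs])
    fix n
    obtain y where "atom (branch (n + length xs) \<beta>) y \<noteq> 0" using nz by blast
    then show "\<exists>y. atom (branch n \<beta>) y \<noteq> 0"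
      unfolding branch_add by (rule atom_append_nonzero)
  qed
qed

definition branch_char :: "(nat \<Rightarrow> bool) \<Rightarrow> 'p set \<Rightarrow> real" where
  "branch_char \<beta> W = (if W \<in> constr_ideals \<and> \<beta> (LEAST i. enum i = W) then 1 else 0)"

context
  fixes \<beta> :: "nat \<Rightarrow> bool"
  assumes nonzero: "\<And>n. \<exists>y. atom (branch n \<beta>) y \<noteq> 0"
begin

text \<open>Every atom along the branch is fixed by the factors it is built from, so no product
  of three of these factors can vanish.\<close>
lemma branch_triple_nonvanishing:
  assumes "\<And>x. sigma_side (\<beta> a) (enum a)
      (sigma_side (\<beta> b) (enum b) (sigma_side (\<beta> c) (enum c) x)) = 0"
  shows False
proof -
  define n where "n = Suc (a + b + c)"
  obtain y where "atom (branch n \<beta>) y \<noteq> 0" using nonzero by blast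
  moreover have "atom (branch n \<beta>) y = sigma_side (\<beta> a) (enum a)
      (sigma_side (\<beta> b) (enum b) (sigma_side (\<beta> c) (enum c) (atom (branch n \<beta>) y)))"
    using atom_absorbs_side[of _ "branch n \<beta>" y] unfolding n_def by simp
  ultimately show False using assms by simp
qed

lemma branch_consistent: "enum i = enum j \<Longrightarrow> \<beta> i = \<beta> j"
  using branch_triple_nonvanishing[of i j j] by (cases "\<beta> i = \<beta> j") (simp_all add: sigma_side_orth)

lemma branch_UNIV: "enum u = UNIV \<Longrightarrow> \<beta> u"
  using branch_triple_nonvanishing[of u u u] by (cases "\<beta> u") simp_all

lemma branch_empty: "enum u = {} \<Longrightarrow> \<not> \<beta> u"
  using branch_triple_nonvanishing[of u u u] by (cases "\<beta> u") simp_all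

lemma branch_Int: "enum c = enum a \<inter> enum b \<Longrightarrow> \<beta> c = (\<beta> a \<and> \<beta> b)"
  using branch_triple_nonvanishing[of a b c] sigma_side_Int_vanish[OF enum_in enum_in] by metis

lemma branch_Un:
  assumes "union_additive \<sigma>" and a: "enum a = enum b \<union> enum c" and "\<beta> a"
  shows "\<beta> b \<or> \<beta> c"
proof (rule ccontr)
  assume "\<not> (\<beta> b \<or> \<beta> c)"
  then have "sigma_side (\<beta> a) (enum a)
      (sigma_side (\<beta> b) (enum b) (sigma_side (\<beta> c) (enum c) x)) = 0" for x
    using sigma_side_Un_vanish[OF assms(1) enum_in enum_in, of b c] enum_in[of a] a \<open>\<beta> a\<close> by simp
  then show False by (rule branch_triple_nonvanishing)
qed

lemma branch_char_enum: "branch_char \<beta> (enum i) = (if \<beta> i then 1 else 0)"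
proof -
  have "enum (LEAST l. enum l = enum i) = enum i" by (rule LeastI) (rule refl)
  then have "\<beta> (LEAST l. enum l = enum i) = \<beta> i" by (rule branch_consistent)
  then show ?thesis unfolding branch_char_def by simp
qed

lemma branch_char_in_spectrum_E: "branch_char \<beta> \<in> spectrum_E"
proof -
  have "branch_char \<beta> (X \<inter> Y) = branch_char \<beta> X * branch_char \<beta> Y"
    if X: "X \<in> constr_ideals" and Y: "Y \<in> constr_ideals" for X Y
  proof -
    obtain a b c where a: "enum a = X" and b: "enum b = Y" and c: "enum c = X \<inter> Y"
      using enum_surj[OF X] enum_surj[OF Y] enum_surj[OF Int_constr[OF X Y]] by blast
    then show ?thesis
      using branch_Int[of c a b] branch_char_enum[of a] branch_char_enum[of b]
        branch_char_enum[of c]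
      by simp
  qed
  moreover obtain u v where u: "enum u = UNIV" and v: "enum v = {}"
    using enum_surj[OF UNIV_in_constr_ideals] enum_surj[OF empty_in_constr_ideals] by blast
  then have "branch_char \<beta> UNIV = 1" and "branch_char \<beta> {} = 0"
    using branch_char_enum[of u] branch_char_enum[of v] branch_UNIV[OF u] branch_empty[OF v]
    by simp_all
  ultimately show ?thesis
    unfolding spectrum_E_eq by (simp add: branch_char_def)
qed

lemma branch_char_in_spectrum_E_vee:
  assumes additive: "union_additive \<sigma>"
  shows "branch_char \<beta> \<in> spectrum_E_vee"
proof -
  have "branch_char \<beta> (X \<union> Y) = branch_char \<beta> X + branch_char \<beta> Y - branch_char \<beta> (X \<inter> Y)"
    if X: "X \<in> constr_ideals" and Y: "Y \<in> constr_ideals" and XY: "X \<union> Y \<in> constr_ideals" for X Y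
  proof -
    obtain a b c d where a: "enum a = X \<union> Y" and b: "enum b = X" and c: "enum c = Y"
      and d: "enum d = X \<inter> Y"
      using enum_surj[OF XY] enum_surj[OF X] enum_surj[OF Y] enum_surj[OF Int_constr[OF X Y]]
      by blast
    have "enum b = enum b \<inter> enum a" "enum c = enum c \<inter> enum a" "enum d = enum b \<inter> enum c"
      using a b c d by auto
    then have "\<beta> a = (\<beta> b \<or> \<beta> c)" "\<beta> d = (\<beta> b \<and> \<beta> c)"
      using branch_Int branch_Un[OF additive] a b c by blast+
    then show ?thesis
      using branch_char_enum[of a] branch_char_enum[of b] branch_char_enum[of c]
        branch_char_enum[of d] a b c d
      by auto
  qed
  then show ?thesis
    using branch_char_in_spectrum_E unfolding spectrum_E_vee_def by blast
qed

end

lemma nonzero_atom_character: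
  assumes "atom xs y \<noteq> 0"
  obtains \<phi> where "\<phi> \<in> spectrum_E" and "matches \<phi> xs"
    and "union_additive \<sigma> \<Longrightarrow> \<phi> \<in> spectrum_E_vee"
proof -
  obtain \<beta> where nz: "\<And>n. \<exists>y. atom (branch n \<beta>) y \<noteq> 0" and xs: "branch (length xs) \<beta> = xs"
    using nonzero_atom_branch[OF assms] by blast
  have "matches (branch_char \<beta>) xs"
    unfolding matches_def using branch_char_enum[OF nz] rev_branch_nth[of _ "length xs" \<beta>] xs
    by auto
  with branch_char_in_spectrum_E[OF nz] branch_char_in_spectrum_E_vee[OF nz] show ?thesis
    using that by blast
qed

definition sampling_in :: "('p set \<Rightarrow> real) set \<Rightarrow> (bool list \<Rightarrow> 'p set \<Rightarrow> real) \<Rightarrow> bool" where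
  "sampling_in F c \<longleftrightarrow> (\<forall>xs y. atom xs y \<noteq> 0 \<longrightarrow> c xs \<in> F \<and> matches (c xs) xs)"

lemma sampling_inD:
  "sampling_in F c \<Longrightarrow> atom xs y \<noteq> 0 \<Longrightarrow> c xs \<in> F"
  "sampling_in F c \<Longrightarrow> atom xs y \<noteq> 0 \<Longrightarrow> matches (c xs) xs"
  unfolding sampling_in_def by blast+

lemma sampling_in_mono: "sampling_in F c \<Longrightarrow> F \<subseteq> G \<Longrightarrow> sampling_in G c"
  unfolding sampling_in_def by blast

lemma sampling_in_exists:
  assumes "\<And>xs y. atom xs y \<noteq> 0 \<Longrightarrow> \<exists>\<phi>\<in>F. matches \<phi> xs"
  obtains c where "sampling_in F c"
proof
  show "sampling_in F (\<lambda>xs. SOME \<phi>. \<phi> \<in> F \<and> matches \<phi> xs)"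
    unfolding sampling_in_def using assms by (metis (mono_tags, lifting) someI_ex)
qed

lemma sampling_in_spectrum_E_exists: obtains c where "sampling_in spectrum_E c"
  using sampling_in_exists nonzero_atom_character by metis

lemma sampling_in_spectrum_E_vee_exists:
  assumes "union_additive \<sigma>"
  obtains c where "sampling_in spectrum_E_vee c"
  using sampling_in_exists nonzero_atom_character assms by metis

definition side_ind :: "bool \<Rightarrow> 'p set \<Rightarrow> ('p set \<Rightarrow> real) \<Rightarrow> complex" where
  "side_ind b W \<phi> = (if b then ind_e W \<phi> else ind_e UNIV \<phi> - ind_e W \<phi>)"

fun cylinder :: "bool list \<Rightarrow> ('p set \<Rightarrow> real) \<Rightarrow> complex" where
  "cylinder [] \<phi> = ind_e UNIV \<phi>"
| "cylinder (b # xs) \<phi> = side_ind b (enum (length xs)) \<phi> * cylinder xs \<phi>"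

lemma continuous_on_side_ind [continuous_intros]: "continuous_on S (side_ind b W)"
  unfolding side_ind_def by (cases b) (auto intro!: continuous_intros)

lemma continuous_on_cylinder [continuous_intros]: "continuous_on S (cylinder xs)"
proof (induction xs)
  case Nil
  have "cylinder [] = ind_e UNIV" by (rule ext) simp
  then show ?case by (simp add: continuous_on_ind_e)
next
  case (Cons b xs)
  have "cylinder (b # xs) = (\<lambda>\<phi>. side_ind b (enum (length xs)) \<phi> * cylinder xs \<phi>)"
    by (rule ext) simp
  then show ?case using Cons by (auto intro!: continuous_intros)
qed

lemma cylinder_eq: "\<phi> \<in> spectrum_E \<Longrightarrow> cylinder xs \<phi> = (if matches \<phi> xs then 1 else 0)"
proof (induction xs)
  case Nil
  then show ?case by (simp add: ind_e_def spectrum_E_UNIV matches_def)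
next
  case (Cons b xs)
  then show ?case
    using spectrum_E_values[OF Cons.prems, of "enum (length xs)"] spectrum_E_UNIV[OF Cons.prems]
    by (auto simp: matches_Cons side_ind_def ind_e_def)
qed

lemma finite_depth_approx:
  assumes f: "continuous_on spectrum_E f" and e: "e > 0"
  obtains N where "\<And>\<phi> \<psi>. \<phi> \<in> spectrum_E \<Longrightarrow> \<psi> \<in> spectrum_E \<Longrightarrow>
      (\<And>i. i < N \<Longrightarrow> \<phi> (enum i) = \<psi> (enum i)) \<Longrightarrow> cmod (f \<phi> - f \<psi>) < e"
proof -
  obtain D where D: "finite D"
    and close: "\<And>\<phi> \<psi>. \<phi> \<in> spectrum_E \<Longrightarrow> \<psi> \<in> spectrum_E \<Longrightarrow> (\<And>X. X \<in> D \<Longrightarrow> \<phi> X = \<psi> X) \<Longrightarrow>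
      dist (f \<phi>) (f \<psi>) < e"
    using continuous_on_compact_finite_coordinates[OF compact_spectrum_E f e] by blast
  define idx where "idx X = (LEAST i. enum i = X)" for X
  have enum_idx: "enum (idx X) = X" if "X \<in> constr_ideals" for X
    unfolding idx_def using enum_surj[OF that] by (rule LeastI_ex)
  define N where "N = Suc (Max (idx ` D))"
  have idx_less: "idx X < N" if "X \<in> D" for X
    unfolding N_def using D that by (simp add: le_imp_less_Suc)
  show ?thesis
  proof
    fix \<phi> \<psi> assume \<phi>: "\<phi> \<in> spectrum_E" and \<psi>: "\<psi> \<in> spectrum_E"
      and agree: "\<And>i. i < N \<Longrightarrow> \<phi> (enum i) = \<psi> (enum i)"
    have "\<phi> X = \<psi> X" if "X \<in> D" for X
    proof (cases "X \<in> constr_ideals")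
      case True
      then show ?thesis using agree[OF idx_less[OF that]] by (simp add: enum_idx)
    next
      case False
      then show ?thesis
        using spectrum_E_not_constr[OF \<phi> False] spectrum_E_not_constr[OF \<psi> False] by simp
    qed
    then show "cmod (f \<phi> - f \<psi>) < e" using close[OF \<phi> \<psi>] by (simp add: dist_norm)
  qed
qed

lemma atom_cscale: "atom xs (cscale J c x) = cscale J c (atom xs x)"
  by (rule cscale_commute) (simp_all add: atom_J)

lemma inner_cscale_atoms_orth:
  assumes "length xs = length ys" and "xs \<noteq> ys"
  shows "inner (cscale J a (atom xs x)) (cscale J b (atom ys y)) = 0"
proof -
  have "inner (cscale J a (atom xs x)) (cscale J b (atom ys y)) =
      inner x (cscale J (cnj a) (cscale J b (atom xs (atom ys y))))"
    by (simp add: inner_cscale_left inner_atom_left atom_cscale)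
  also have "atom xs (atom ys y) = 0"
    using atom_orth[OF assms] .
  finally show ?thesis by (simp add: linear_simps)
qed

lemma inner_sigma_UNIV_le: "inner x (\<sigma> UNIV x) \<le> (norm x)\<^sup>2"
  by (rule projection_inner_le) (simp_all add: inner_sigma_left)

lemma norm_sum_atoms_le:
  assumes B: "B \<ge> 0"
    and d: "\<And>xs. xs \<in> bool_lists n \<Longrightarrow> atom xs x \<noteq> 0 \<Longrightarrow> cmod (d xs) \<le> B"
  shows "norm (\<Sum>xs\<in>bool_lists n. cscale J (d xs) (atom xs x)) \<le> B * norm x"
proof -
  have "(norm (\<Sum>xs\<in>bool_lists n. cscale J (d xs) (atom xs x)))\<^sup>2 =
      (\<Sum>xs\<in>bool_lists n. (norm (cscale J (d xs) (atom xs x)))\<^sup>2)"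
    by (rule norm_sum_Pythagorean[OF finite_bool_lists])
      (auto simp: pairwise_def orthogonal_def bool_lists_def inner_cscale_atoms_orth)
  also have "\<dots> \<le> (\<Sum>xs\<in>bool_lists n. B\<^sup>2 * (norm (atom xs x))\<^sup>2)"
  proof (rule sum_mono)
    fix xs assume xs: "xs \<in> bool_lists n"
    show "(norm (cscale J (d xs) (atom xs x)))\<^sup>2 \<le> B\<^sup>2 * (norm (atom xs x))\<^sup>2"
    proof (cases "atom xs x = 0")
      case False
      then have "(cmod (d xs))\<^sup>2 \<le> B\<^sup>2" using d[OF xs] by (simp add: power_mono)
      then show ?thesis by (simp add: norm_cscale power_mult_distrib mult_right_mono)
    qed (simp add: linear_simps)
  qed
  also have "\<dots> = B\<^sup>2 * (\<Sum>xs\<in>bool_lists n. inner x (atom xs x))"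
    by (simp add: sum_distrib_left inner_atom_self)
  also have "\<dots> = B\<^sup>2 * inner x (\<sigma> UNIV x)"
    by (simp add: sum_atoms flip: inner_sum_right)
  also have "\<dots> \<le> B\<^sup>2 * (norm x)\<^sup>2"
    by (simp add: mult_left_mono inner_sigma_UNIV_le)
  finally have "(norm (\<Sum>xs\<in>bool_lists n. cscale J (d xs) (atom xs x)))\<^sup>2 \<le> (B * norm x)\<^sup>2"
    by (simp only: power_mult_distrib)
  then show ?thesis by (rule power2_le_imp_le) (use B in simp)
qed

definition atom_sum ::
    "(bool list \<Rightarrow> 'p set \<Rightarrow> real) \<Rightarrow> nat \<Rightarrow> (('p set \<Rightarrow> real) \<Rightarrow> complex) \<Rightarrow> 'h \<Rightarrow> 'h" where
  "atom_sum c n f x = (\<Sum>xs\<in>bool_lists n. cscale J (f (c xs)) (atom xs x))"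

lemma bounded_linear_atom_sum [simp]: "bounded_linear (atom_sum c n f)"
  unfolding atom_sum_def
  by (intro bounded_linear_sum bounded_linear_compose[OF bounded_linear_cscale bounded_linear_atom])

lemma atom_sum_J: "atom_sum c n f (J x) = J (atom_sum c n f x)"
  unfolding atom_sum_def
  by (simp add: atom_J cscale_J linear_sum[OF bounded_linear.linear[OF bounded_linear_J]])

lemma atom_sum_refine:
  "atom_sum c n f x = (\<Sum>ys\<in>bool_lists (k + n). cscale J (f (c (drop k ys))) (atom ys x))"
proof -
  have "(\<Sum>ys\<in>bool_lists (k + n). cscale J (f (c (drop k ys))) (atom ys x)) =
      (\<Sum>zs\<in>bool_lists k. \<Sum>xs\<in>bool_lists n. cscale J (f (c xs)) (atom (zs @ xs) x))"
    unfolding sum_bool_lists_add by (intro sum.cong refl) (simp add: bool_lists_def)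
  also have "\<dots> = (\<Sum>xs\<in>bool_lists n. cscale J (f (c xs)) (\<Sum>zs\<in>bool_lists k. atom (zs @ xs) x))"
    by (subst sum.swap) (simp add: linear_sum[OF bounded_linear.linear[OF bounded_linear_cscale]])
  finally show ?thesis by (simp add: sum_atoms_append atom_sum_def)
qed

lemma atom_sum_close:
  assumes c: "sampling_in spectrum_E c" and f: "continuous_on spectrum_E f" and e: "e > 0"
  obtains N where "\<And>n k. N \<le> n \<Longrightarrow> norm (atom_sum c (k + n) f x - atom_sum c n f x) < e"
proof -
  define e' where "e' = e / (norm x + 1)"
  have e': "e' > 0" and "e' * norm x < e"
    using e by (simp_all add: e'_def field_simps add_pos_nonneg)
  obtain N where N: "\<And>\<phi> \<psi>. \<phi> \<in> spectrum_E \<Longrightarrow> \<psi> \<in> spectrum_E \<Longrightarrow>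
      (\<And>i. i < N \<Longrightarrow> \<phi> (enum i) = \<psi> (enum i)) \<Longrightarrow> cmod (f \<phi> - f \<psi>) < e'"
    using finite_depth_approx[OF f e'] by blast
  have close: "norm (atom_sum c (k + n) f x - atom_sum c n f x) \<le> e' * norm x" if n: "N \<le> n" for n k
  proof -
    have "atom_sum c (k + n) f x - atom_sum c n f x =
        (\<Sum>ys\<in>bool_lists (k + n). cscale J (f (c ys) - f (c (drop k ys))) (atom ys x))"
      unfolding atom_sum_refine[of c n f x k]
      by (simp add: atom_sum_def cscale_diff_left sum_subtractf)
    also have "norm \<dots> \<le> e' * norm x"
    proof (rule norm_sum_atoms_le)
      fix ys assume ys: "ys \<in> bool_lists (k + n)" and nz: "atom ys x \<noteq> 0"
      then obtain y where nz': "atom (drop k ys) y \<noteq> 0"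
        using atom_append_nonzero[of "take k ys" "drop k ys" x] by auto
      have "matches (c ys) (drop k ys)"
        using sampling_inD(2)[OF c nz] matches_append[of _ "take k ys"] by simp
      moreover have "matches (c (drop k ys)) (drop k ys)"
        using sampling_inD(2)[OF c nz'] .
      moreover have "length (drop k ys) = n" using ys by (simp add: bool_lists_def)
      ultimately have "c ys (enum i) = c (drop k ys) (enum i)" if "i < N" for i
        using matches_agree that n by simp
      then show "cmod (f (c ys) - f (c (drop k ys))) \<le> e'"
        using N[OF sampling_inD(1)[OF c nz] sampling_inD(1)[OF c nz']] by (simp add: less_imp_le)
    qed (use e' in simp)
    finally show ?thesis .
  qed
  show ?thesis
    using that close \<open>e' * norm x < e\<close> by (meson order_le_less_trans)
qed

lemma atom_sum_add_fun: "atom_sum c n (\<lambda>\<phi>. f \<phi> + g \<phi>) x = atom_sum c n f x + atom_sum c n g x"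
  unfolding atom_sum_def by (simp add: cscale_add_left sum.distrib)

lemma atom_sum_scale_fun: "atom_sum c n (\<lambda>\<phi>. a * f \<phi>) x = cscale J a (atom_sum c n f x)"
  unfolding atom_sum_def
  by (simp add: cscale_mult linear_sum[OF bounded_linear.linear[OF bounded_linear_cscale]])

lemma atom_sum_mult_fun:
  "atom_sum c n (\<lambda>\<phi>. f \<phi> * g \<phi>) x = atom_sum c n f (atom_sum c n g x)"
proof -
  have "atom xs (atom_sum c n g x) = cscale J (g (c xs)) (atom xs x)"
    if xs: "xs \<in> bool_lists n" for xs
  proof -
    have "atom xs (atom_sum c n g x) =
        (\<Sum>ys\<in>bool_lists n. if ys = xs then cscale J (g (c xs)) (atom xs x) else 0)"
      unfolding atom_sum_def atom_sum_distrib
      by (intro sum.cong refl)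
        (use xs in \<open>auto simp: atom_cscale atom_orth bool_lists_def linear_simps\<close>)
    then show ?thesis using xs by simp
  qed
  then show ?thesis
    unfolding atom_sum_def[of c n f]
    by (simp add: cscale_mult atom_sum_def[of c n "\<lambda>\<phi>. f \<phi> * g \<phi>"])
qed

lemma atom_sum_adjoint: "inner (atom_sum c n f x) y = inner x (atom_sum c n (\<lambda>\<phi>. cnj (f \<phi>)) y)"
  unfolding atom_sum_def
  by (simp add: inner_sum_left inner_sum_right inner_cscale_left inner_atom_left atom_cscale)

end

section \<open>The representation given by limits of atom sums\<close>

locale rep_E_sampling = rep_E J \<sigma>
  for J :: "'h::{real_inner,complete_space} \<Rightarrow> 'h" and \<sigma> :: "'p::monoid_mult set \<Rightarrow> 'h \<Rightarrow> 'h" +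
  fixes c :: "bool list \<Rightarrow> 'p set \<Rightarrow> real"
  assumes sampling_c: "sampling_in spectrum_E c"
begin

text \<open>The limit exists for continuous \<open>f\<close> only; elsewhere \<^const>\<open>lim\<close> returns an unspecified
  value, which is harmless since \<^const>\<open>is_star_rep\<close> only constrains continuous functions.\<close>
definition atom_limit :: "(('p set \<Rightarrow> real) \<Rightarrow> complex) \<Rightarrow> 'h \<Rightarrow> 'h" where
  "atom_limit f x = lim (\<lambda>n. atom_sum c n f x)"

lemma atom_sum_LIMSEQ:
  assumes f: "continuous_on spectrum_E f"
  shows "(\<lambda>n. atom_sum c n f x) \<longlonglongrightarrow> atom_limit f x"
proof -
  have "Cauchy (\<lambda>n. atom_sum c n f x)"
    unfolding Cauchy_altdef2 dist_norm
  proof (intro allI impI)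
    fix e :: real assume "e > 0"
    then obtain N where "\<And>n k. N \<le> n \<Longrightarrow> norm (atom_sum c (k + n) f x - atom_sum c n f x) < e"
      using atom_sum_close[OF sampling_c f] by blast
    then show "\<exists>N. \<forall>n\<ge>N. norm (atom_sum c n f x - atom_sum c N f x) < e"
      by (metis order_refl le_add_diff_inverse2)
  qed
  then show ?thesis
    unfolding atom_limit_def by (simp add: Cauchy_convergent_iff convergent_LIMSEQ_iff)
qed

lemma atom_limit_eqI:
  "continuous_on spectrum_E f \<Longrightarrow> (\<lambda>n. atom_sum c n f x) \<longlonglongrightarrow> y \<Longrightarrow> atom_limit f x = y"
  using atom_sum_LIMSEQ LIMSEQ_unique by blast

lemma atom_sum_norm_le:
  assumes "M \<ge> 0" and "\<And>\<phi>. \<phi> \<in> spectrum_E \<Longrightarrow> cmod (f \<phi>) \<le> M"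
  shows "norm (atom_sum c n f x) \<le> M * norm x"
  unfolding atom_sum_def
  by (rule norm_sum_atoms_le[OF assms(1)]) (rule assms(2)[OF sampling_inD(1)[OF sampling_c]])

lemma atom_sum_cong:
  assumes "\<And>\<phi>. \<phi> \<in> spectrum_E \<Longrightarrow> f \<phi> = g \<phi>"
  shows "atom_sum c n f x = atom_sum c n g x"
  unfolding atom_sum_def
proof (intro sum.cong refl)
  fix xs
  show "cscale J (f (c xs)) (atom xs x) = cscale J (g (c xs)) (atom xs x)"
    using assms[OF sampling_inD(1)[OF sampling_c]]
    by (cases "atom xs x = 0") (auto simp: linear_simps)
qed

lemma atom_sum_ind:
  assumes "i < n"
  shows "atom_sum c n (ind_e (enum i)) x = \<sigma> (enum i) x"
proof -
  have "cscale J (ind_e (enum i) (c xs)) (atom xs x) = \<sigma> (enum i) (atom xs x)"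
    if xs: "xs \<in> bool_lists n" for xs
  proof (cases "atom xs x = 0")
    case False
    have i: "i < length xs" using xs assms by (simp add: bool_lists_def)
    then have "c xs (enum i) = (if rev xs ! i then 1 else 0)"
      using sampling_inD(2)[OF sampling_c False] unfolding matches_def by blast
    moreover have "sigma_side (rev xs ! i) (enum i) (atom xs x) = atom xs x"
      by (rule atom_absorbs_side[OF i])
    ultimately show ?thesis
      by (cases "rev xs ! i") (auto simp: ind_e_def sigma_side_def linear_simps)
  qed (simp add: linear_simps)
  then have "atom_sum c n (ind_e (enum i)) x = \<sigma> (enum i) (\<Sum>xs\<in>bool_lists n. atom xs x)"
    unfolding atom_sum_def
    by (simp add: linear_sum[OF bounded_linear.linear[OF bounded_linear_sigma]])
  then show ?thesis by (simp add: sum_atoms)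
qed

lemma atom_limit_norm_le:
  assumes f: "continuous_on spectrum_E f" and "M \<ge> 0"
    and "\<And>\<phi>. \<phi> \<in> spectrum_E \<Longrightarrow> cmod (f \<phi>) \<le> M"
  shows "norm (atom_limit f x) \<le> M * norm x"
proof (rule Lim_bounded)
  show "(\<lambda>n. norm (atom_sum c n f x)) \<longlonglongrightarrow> norm (atom_limit f x)"
    by (intro tendsto_norm atom_sum_LIMSEQ f)
  show "\<forall>n\<ge>0. norm (atom_sum c n f x) \<le> M * norm x"
    using atom_sum_norm_le[of M f] assms(2,3) by blast
qed

lemma bounded_linear_atom_limit:
  assumes f: "continuous_on spectrum_E f"
  shows "bounded_linear (atom_limit f)"
proof
  show "atom_limit f (a + b) = atom_limit f a + atom_limit f b" for a b
    by (rule atom_limit_eqI[OF f])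
      (simp add: linear_simps tendsto_add atom_sum_LIMSEQ[OF f])
  show "atom_limit f (r *\<^sub>R a) = r *\<^sub>R atom_limit f a" for r a
    by (rule atom_limit_eqI[OF f])
      (simp add: linear_simps tendsto_scaleR atom_sum_LIMSEQ[OF f])
  obtain M where "M \<ge> 0" "\<And>\<phi>. \<phi> \<in> spectrum_E \<Longrightarrow> cmod (f \<phi>) \<le> M"
    using continuous_on_spectrum_E_bounded[OF f] by blast
  then show "\<exists>K. \<forall>x. norm (atom_limit f x) \<le> norm x * K"
    using atom_limit_norm_le[OF f] by (metis mult.commute)
qed

lemma atom_limit_J: "continuous_on spectrum_E f \<Longrightarrow> atom_limit f (J x) = J (atom_limit f x)"
  by (rule atom_limit_eqI)
    (simp_all add: atom_sum_J bounded_linear.tendsto[OF bounded_linear_J atom_sum_LIMSEQ])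

lemma atom_limit_cong:
  assumes "\<And>\<phi>. \<phi> \<in> spectrum_E \<Longrightarrow> f \<phi> = g \<phi>"
  shows "atom_limit f = atom_limit g"
  unfolding atom_limit_def[abs_def] by (simp add: atom_sum_cong[OF assms])

lemma atom_limit_add:
  "continuous_on spectrum_E f \<Longrightarrow> continuous_on spectrum_E g \<Longrightarrow>
    atom_limit (\<lambda>\<phi>. f \<phi> + g \<phi>) x = atom_limit f x + atom_limit g x"
  by (rule atom_limit_eqI)
    (simp_all add: continuous_on_add atom_sum_add_fun tendsto_add atom_sum_LIMSEQ)

lemma atom_limit_scale:
  "continuous_on spectrum_E f \<Longrightarrow> atom_limit (\<lambda>\<phi>. a * f \<phi>) x = cscale J a (atom_limit f x)"
  by (rule atom_limit_eqI)
    (simp_all add: continuous_on_mult continuous_on_const atom_sum_scale_fun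
      bounded_linear.tendsto[OF bounded_linear_cscale atom_sum_LIMSEQ])

lemma atom_limit_mult:
  assumes f: "continuous_on spectrum_E f" and g: "continuous_on spectrum_E g"
  shows "atom_limit (\<lambda>\<phi>. f \<phi> * g \<phi>) x = atom_limit f (atom_limit g x)"
proof (rule atom_limit_eqI)
  show "continuous_on spectrum_E (\<lambda>\<phi>. f \<phi> * g \<phi>)" using f g by (rule continuous_on_mult)
  obtain M where M: "M \<ge> 0" "\<And>\<phi>. \<phi> \<in> spectrum_E \<Longrightarrow> cmod (f \<phi>) \<le> M"
    using continuous_on_spectrum_E_bounded[OF f] by blast
  let ?y = "atom_limit g x"
  have "(\<lambda>n. atom_sum c n g x - ?y) \<longlonglongrightarrow> 0"
    using atom_sum_LIMSEQ[OF g] by (simp add: LIM_zero)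
  then have "(\<lambda>n. atom_sum c n f (atom_sum c n g x - ?y)) \<longlonglongrightarrow> 0"
    by (rule tendsto_0_le[where K = M]) (use atom_sum_norm_le[OF M] in \<open>simp add: mult.commute\<close>)
  then have "(\<lambda>n. atom_sum c n f ?y + atom_sum c n f (atom_sum c n g x - ?y)) \<longlonglongrightarrow> atom_limit f ?y + 0"
    by (intro tendsto_add atom_sum_LIMSEQ[OF f])
  then show "(\<lambda>n. atom_sum c n (\<lambda>\<phi>. f \<phi> * g \<phi>) x) \<longlonglongrightarrow> atom_limit f ?y"
    by (simp add: atom_sum_mult_fun linear_simps)
qed

lemma atom_limit_adjoint:
  assumes f: "continuous_on spectrum_E f"
  shows "inner (atom_limit f x) y = inner x (atom_limit (\<lambda>\<phi>. cnj (f \<phi>)) y)"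
proof -
  have "(\<lambda>n. inner (atom_sum c n f x) y) \<longlonglongrightarrow> inner (atom_limit f x) y"
    by (intro tendsto_inner atom_sum_LIMSEQ f tendsto_const)
  moreover have "(\<lambda>n. inner (atom_sum c n f x) y) \<longlonglongrightarrow> inner x (atom_limit (\<lambda>\<phi>. cnj (f \<phi>)) y)"
    unfolding atom_sum_adjoint
    by (intro tendsto_inner atom_sum_LIMSEQ tendsto_const continuous_on_cnj f)
  ultimately show ?thesis by (rule LIMSEQ_unique)
qed

lemma atom_limit_ind: "X \<in> constr_ideals \<Longrightarrow> atom_limit (ind_e X) = \<sigma> X"
proof (rule ext)
  fix x assume "X \<in> constr_ideals"
  then obtain i where i: "enum i = X" using enum_surj by blast
  have "\<forall>\<^sub>F n in sequentially. atom_sum c n (ind_e X) x = \<sigma> X x"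
    unfolding eventually_sequentially using atom_sum_ind[where i = i] i by (metis Suc_le_lessD)
  then show "atom_limit (ind_e X) x = \<sigma> X x"
    by (rule atom_limit_eqI[OF continuous_on_ind_e tendsto_eventually])
qed

lemma star_rep_atom_limit: "is_star_rep J atom_limit"
proof -
  have "is_bop J (atom_limit f)" if "continuous_on spectrum_E f" for f
    unfolding is_bop_def using bounded_linear_atom_limit atom_limit_J that by blast
  moreover have "is_adjoint (atom_limit f) (atom_limit (\<lambda>\<phi>. cnj (f \<phi>)))"
    if "continuous_on spectrum_E f" for f
    unfolding is_adjoint_def using atom_limit_adjoint that by blast
  moreover have "atom_limit (\<lambda>\<phi>. f \<phi> * g \<phi>) = atom_limit f \<circ> atom_limit g"
    if "continuous_on spectrum_E f" "continuous_on spectrum_E g" for f g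
    using atom_limit_mult[OF that] by (simp add: fun_eq_iff)
  ultimately show ?thesis
    unfolding is_star_rep_def using atom_limit_cong atom_limit_add atom_limit_scale by blast
qed

end

locale rep_E_extension = rep_E J \<sigma> + star_rep J \<pi>
  for J :: "'h::{real_inner,complete_space} \<Rightarrow> 'h" and \<sigma> :: "'p::monoid_mult set \<Rightarrow> 'h \<Rightarrow> 'h"
    and \<pi> :: "(('p set \<Rightarrow> real) \<Rightarrow> complex) \<Rightarrow> 'h \<Rightarrow> 'h" +
  assumes extends: "\<And>X. X \<in> constr_ideals \<Longrightarrow> \<pi> (ind_e X) = \<sigma> X"
begin

lemma rep_sigma_UNIV:
  assumes f: "continuous_on spectrum_E f"
  shows "\<pi> f (\<sigma> UNIV x) = \<pi> f x"
proof -
  have "\<pi> f (\<sigma> UNIV x) = \<pi> (\<lambda>\<phi>. f \<phi> * ind_e UNIV \<phi>) x"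
    using rep_mult[OF f continuous_on_ind_e] extends[OF UNIV_in_constr_ideals] by simp
  also have "\<dots> = \<pi> f x"
    using f by (intro rep_cong[THEN fun_cong])
      (auto intro!: continuous_intros simp: ind_e_def spectrum_E_UNIV)
  finally show ?thesis .
qed

lemma rep_side_ind: "W \<in> constr_ideals \<Longrightarrow> \<pi> (side_ind b W) x = sigma_side b W x"
  by (cases b)
    (simp_all add: side_ind_def[abs_def] sigma_side_def extends rep_diff continuous_on_ind_e)

lemma rep_cylinder: "\<pi> (cylinder xs) x = atom xs x"
proof (induction xs arbitrary: x)
  case Nil
  have "cylinder [] = ind_e UNIV" by (rule ext) simp
  then show ?case by (simp add: extends)
next
  case (Cons b xs)
  have "cylinder (b # xs) = (\<lambda>\<phi>. side_ind b (enum (length xs)) \<phi> * cylinder xs \<phi>)"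
    by (rule ext) simp
  then have "\<pi> (cylinder (b # xs)) x = \<pi> (side_ind b (enum (length xs))) (\<pi> (cylinder xs) x)"
    by (simp add: rep_mult[OF continuous_on_side_ind continuous_on_cylinder])
  then show ?case by (simp only: Cons.IH rep_side_ind[OF enum_in] atom.simps)
qed

lemma rep_minus_atom_sum:
  fixes x :: 'h and n :: nat
  assumes f: "continuous_on spectrum_E f"
  defines "A \<equiv> {xs \<in> bool_lists n. atom xs x \<noteq> 0}"
  shows "\<pi> f x - atom_sum c n f x = \<pi> (\<lambda>\<phi>. \<Sum>xs\<in>A. (f \<phi> - f (c xs)) * cylinder xs \<phi>) x"
proof -
  have summand: "\<pi> (\<lambda>\<phi>. (f \<phi> - f (c xs)) * cylinder xs \<phi>) x =
      \<pi> f (atom xs x) - cscale J (f (c xs)) (atom xs x)" for xs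
  proof -
    have "\<pi> (\<lambda>\<phi>. (f \<phi> - f (c xs)) * cylinder xs \<phi>) x = \<pi> (\<lambda>\<phi>. f \<phi> - f (c xs)) (atom xs x)"
      by (simp add: rep_mult[OF continuous_on_diff[OF f continuous_on_const] continuous_on_cylinder]
          rep_cylinder)
    also have "\<dots> = \<pi> f (atom xs x) - \<pi> (\<lambda>\<phi>. f (c xs)) (atom xs x)"
      by (rule rep_diff[OF f continuous_on_const])
    also have "\<pi> (\<lambda>\<phi>. f (c xs)) = \<pi> (\<lambda>\<phi>. f (c xs) * ind_e UNIV \<phi>)"
      by (rule rep_cong[OF continuous_on_const
            continuous_on_mult[OF continuous_on_const continuous_on_ind_e]])
        (simp add: ind_e_def spectrum_E_UNIV)
    also have "\<pi> (\<lambda>\<phi>. f (c xs) * ind_e UNIV \<phi>) (atom xs x) = cscale J (f (c xs)) (atom xs x)"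
      by (simp add: rep_scale[OF continuous_on_ind_e] extends)
    finally show ?thesis .
  qed
  have "\<pi> (\<lambda>\<phi>. \<Sum>xs\<in>A. (f \<phi> - f (c xs)) * cylinder xs \<phi>) x =
      (\<Sum>xs\<in>A. \<pi> f (atom xs x) - cscale J (f (c xs)) (atom xs x))"
    using f by (simp add: rep_sum A_def summand continuous_intros)
  also have "\<dots> = (\<Sum>xs\<in>bool_lists n. \<pi> f (atom xs x) - cscale J (f (c xs)) (atom xs x))"
    by (rule sum.mono_neutral_left) (auto simp: A_def linear_simps bounded_linear_rep[OF f])
  also have "\<dots> = \<pi> f x - atom_sum c n f x"
  proof -
    have "(\<Sum>xs\<in>bool_lists n. \<pi> f (atom xs x)) = \<pi> f (\<Sum>xs\<in>bool_lists n. atom xs x)"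
      by (rule linear_sum[OF bounded_linear.linear[OF bounded_linear_rep[OF f]], symmetric])
    then show ?thesis
      by (simp add: atom_sum_def sum_subtractf sum_atoms rep_sigma_UNIV[OF f])
  qed
  finally show ?thesis by simp
qed

lemma rep_atom_sum_approx:
  assumes c: "sampling_in spectrum_E c" and f: "continuous_on spectrum_E f" and "e \<ge> 0"
    and N: "\<And>\<phi> \<psi>. \<phi> \<in> spectrum_E \<Longrightarrow> \<psi> \<in> spectrum_E \<Longrightarrow>
      (\<And>i. i < N \<Longrightarrow> \<phi> (enum i) = \<psi> (enum i)) \<Longrightarrow> cmod (f \<phi> - f \<psi>) < e"
    and "N \<le> n"
  shows "norm (\<pi> f x - atom_sum c n f x) \<le> e * norm x"
proof -
  define A where "A = {xs \<in> bool_lists n. atom xs x \<noteq> 0}"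
  have "finite A" unfolding A_def by simp
  have "norm (\<pi> (\<lambda>\<phi>. \<Sum>xs\<in>A. (f \<phi> - f (c xs)) * cylinder xs \<phi>) x) \<le> e * norm x"
  proof (rule rep_norm_le)
    fix \<phi> :: "'p set \<Rightarrow> real" assume \<phi>: "\<phi> \<in> spectrum_E"
    have "(\<Sum>xs\<in>A. (f \<phi> - f (c xs)) * cylinder xs \<phi>) =
        (\<Sum>xs\<in>A. if xs = pattern n \<phi> then f \<phi> - f (c xs) else 0)"
      by (intro sum.cong refl)
        (simp add: cylinder_eq[OF \<phi>] matches_iff_pattern[OF \<phi>] A_def bool_lists_def)
    also have "\<dots> = (if pattern n \<phi> \<in> A then f \<phi> - f (c (pattern n \<phi>)) else 0)"
      using \<open>finite A\<close> by (simp add: sum.delta)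
    also have "cmod \<dots> \<le> e"
    proof (cases "pattern n \<phi> \<in> A")
      case True
      then have nz: "atom (pattern n \<phi>) x \<noteq> 0" by (simp add: A_def)
      have "c (pattern n \<phi>) (enum i) = \<phi> (enum i)" if "i < N" for i
        using matches_agree[OF sampling_inD(2)[OF c nz]] matches_iff_pattern[OF \<phi>] that \<open>N \<le> n\<close>
        by (simp add: pattern_def)
      then have "cmod (f \<phi> - f (c (pattern n \<phi>))) < e"
        using N[OF \<phi> sampling_inD(1)[OF c nz]] by simp
      with True show ?thesis by simp
    qed (simp add: \<open>e \<ge> 0\<close>)
    finally show "cmod (\<Sum>xs\<in>A. (f \<phi> - f (c xs)) * cylinder xs \<phi>) \<le> e" .
  qed (use f \<open>e \<ge> 0\<close> in \<open>auto intro!: continuous_intros\<close>)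
  then show ?thesis
    unfolding A_def by (simp flip: rep_minus_atom_sum[OF f])
qed

lemma union_additive_imp_vanishing:
  assumes additive: "union_additive \<sigma>" and f: "continuous_on spectrum_E f"
    and vanish: "\<And>\<phi>. \<phi> \<in> spectrum_E_vee \<Longrightarrow> f \<phi> = 0"
  shows "\<pi> f x = 0"
proof -
  obtain c where c: "sampling_in spectrum_E_vee c"
    using sampling_in_spectrum_E_vee_exists[OF additive] by blast
  have "cscale J (f (c xs)) (atom xs x) = 0" for xs
    using vanish[OF sampling_inD(1)[OF c]] by (cases "atom xs x = 0") (simp_all add: linear_simps)
  then have sum_zero: "atom_sum c n f x = 0" for n
    unfolding atom_sum_def by simp
  have c': "sampling_in spectrum_E c"
    by (rule sampling_in_mono[OF c]) (auto simp: spectrum_E_vee_def)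
  have bound: "norm (\<pi> f x) \<le> e * norm x" if e: "e > 0" for e
  proof -
    obtain N where N: "\<And>\<phi> \<psi>. \<phi> \<in> spectrum_E \<Longrightarrow> \<psi> \<in> spectrum_E \<Longrightarrow>
        (\<And>i. i < N \<Longrightarrow> \<phi> (enum i) = \<psi> (enum i)) \<Longrightarrow> cmod (f \<phi> - f \<psi>) < e"
      using finite_depth_approx[OF f e] by blast
    have "norm (\<pi> f x - atom_sum c N f x) \<le> e * norm x"
      by (rule rep_atom_sum_approx[OF c' f less_imp_le[OF e] N order_refl])
    then show ?thesis by (simp add: sum_zero)
  qed
  have "norm (\<pi> f x) \<le> 0"
  proof (rule field_le_epsilon)
    fix e :: real assume "e > 0"
    have pos: "norm x + 1 > 0" using norm_ge_zero[of x] by linarith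
    have "norm (\<pi> f x) \<le> e / (norm x + 1) * norm x"
      by (rule bound[OF divide_pos_pos[OF \<open>e > 0\<close> pos]])
    also have "\<dots> \<le> e"
      using \<open>e > 0\<close> pos by (simp add: field_simps)
    finally show "norm (\<pi> f x) \<le> 0 + e" by simp
  qed
  then show ?thesis by simp
qed

lemma vanishing_imp_union_additive:
  assumes vanishing: "\<And>f. continuous_on spectrum_E f \<Longrightarrow> (\<And>\<phi>. \<phi> \<in> spectrum_E_vee \<Longrightarrow> f \<phi> = 0) \<Longrightarrow>
      \<pi> f = (\<lambda>x. 0)"
  shows "union_additive \<sigma>"
  unfolding union_additive_def
proof (intro ballI impI ext)
  fix X Y :: "'p set" and x :: 'h
  assume X: "X \<in> constr_ideals" and Y: "Y \<in> constr_ideals" and XY: "X \<union> Y \<in> constr_ideals"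
  define f where "f \<phi> = ind_e (X \<union> Y) \<phi> - ind_e X \<phi> - ind_e Y \<phi> + ind_e (X \<inter> Y) \<phi>" for \<phi>
  have "\<pi> f x = 0"
  proof (rule vanishing[THEN fun_cong])
    show "continuous_on spectrum_E f"
      unfolding f_def by (intro continuous_intros)
    show "f \<phi> = 0" if "\<phi> \<in> spectrum_E_vee" for \<phi>
      using that X Y XY unfolding spectrum_E_vee_def f_def ind_e_def
      by (simp flip: of_real_diff of_real_add)
  qed
  moreover have "\<pi> f x = \<sigma> (X \<union> Y) x - \<sigma> X x - \<sigma> Y x + \<sigma> (X \<inter> Y) x"
    unfolding f_def using X Y XY
    by (simp add: rep_add rep_diff continuous_intros extends)
  ultimately show "\<sigma> (X \<union> Y) x = \<sigma> X x + \<sigma> Y x - \<sigma> (X \<inter> Y) x"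
    by (simp add: algebra_simps)
qed

end

context rep_E
begin

lemma supported_iff_union_additive: "supported_in J \<sigma> spectrum_E_vee \<longleftrightarrow> union_additive \<sigma>"
proof
  assume supported: "supported_in J \<sigma> spectrum_E_vee"
  obtain c where "sampling_in spectrum_E c" by (rule sampling_in_spectrum_E_exists)
  then interpret rep_E_sampling J \<sigma> c by unfold_locales
  interpret rep_E_extension J \<sigma> atom_limit
    by unfold_locales (simp_all add: star_rep_atom_limit atom_limit_ind)
  show "union_additive \<sigma>"
    using supported star_rep_atom_limit atom_limit_ind unfolding supported_in_def
    by (intro vanishing_imp_union_additive) blast
next
  assume "union_additive \<sigma>"
  show "supported_in J \<sigma> spectrum_E_vee"
    unfolding supported_in_def
  proof (intro allI impI ext)
    fix \<pi> :: "(('p set \<Rightarrow> real) \<Rightarrow> complex) \<Rightarrow> 'h \<Rightarrow> 'h"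
      and f :: "('p set \<Rightarrow> real) \<Rightarrow> complex" and x :: 'h
    assume \<pi>: "is_star_rep J \<pi> \<and> (\<forall>X\<in>constr_ideals. \<pi> (ind_e X) = \<sigma> X)"
      and f: "continuous_on spectrum_E f \<and> (\<forall>\<phi>\<in>spectrum_E_vee. f \<phi> = 0)"
    interpret rep_E_extension J \<sigma> \<pi>
      using \<pi> by unfold_locales blast+
    show "\<pi> f x = 0"
      using \<open>union_additive \<sigma>\<close> f union_additive_imp_vanishing by blast
  qed
qed

end

theorem mainTheorem3:
  fixes J :: "'h::{real_inner,complete_space} \<Rightarrow> 'h"
    and \<sigma> :: "'p::monoid_mult set \<Rightarrow> 'h \<Rightarrow> 'h"
  assumes "countable (UNIV :: 'p set)"
    and "left_cancellative TYPE('p)"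
    and "complex_structure J"
    and "is_rep_E J \<sigma>"
  shows "supported_in J \<sigma> spectrum_E_vee \<longleftrightarrow>
    (\<forall>X\<in>constr_ideals. \<forall>Y\<in>constr_ideals. X \<union> Y \<in> constr_ideals \<longrightarrow>
       \<sigma> (X \<union> Y) = (\<lambda>x. \<sigma> X x + \<sigma> Y x - \<sigma> (X \<inter> Y) x))"
proof -
  interpret rep_E J \<sigma>
    using assms by unfold_locales
  show ?thesis
    using supported_iff_union_additive unfolding union_additive_def .
qed

end
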